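(* Let $f_1:\mathbb{R}^m\to(-\infty,+\infty]$ be proper convex lower semi-continuous, let $B\in\mathbb{R}^{m\times d}$ have full row rank, and let $f_2(x)=\frac1n\sum_{i=1}^n\phi_i(x)$ with each $\phi_i:\mathbb{R}^d\to\mathbb{R}$ smooth and convex, $f_2$ being $\nu$-strongly convex ($\nu>0$) with $\frac1\beta$-Lipschitz gradient ($\beta>0$). Let $x^*$ be a minimizer of $f_1(Bx)+f_2(x)$ and $v^*\in\mathbb{R}^m$ such that for every $k$, with $h_k(x)=\frac{\lambda}{\gamma_k}f_1(\frac{\gamma_k}{\lambda}x)$, $$v^*=(I-\mathrm{Prox}_{h_k})\Big(\tfrac{\lambda}{\gamma_k}B\big(x^*-\gamma_k\nabla f_2(x^* )\big)+(I-\lambda BB^T)v^*\Big),\qquad x^*=x^*-\gamma_k\nabla f_2(x^* )-\gamma_kB^Tv^*.$$ Let $(x_k,v_k)$ be generated by Algorithm 1 (described in the context) with $c>0$, $\alpha\in(0,1]$, $0<\lambda<1/\rho_{\max}(BB^T)$, and assume there exist $C_1,C_2>0$ such that for all $k$, $\mathbb{E}^{(k+1)}\big(\|\nabla f_2^{[i_k]}(x_k)-\nabla f_2(x_k)\|_2^2\big)\le C_1\mathbb{E}^{(k)}(\|x_k\|_2^2)+C_2$. Let $k_0>0$ be an integer with $\gamma_{k_0}\le\min\{\frac{\beta\nu}{2(\nu+2C_1\beta)},\frac{\lambda\rho_{\min}(BB^T)}{\nu}\}$. Then, with $a_k=\mathbb{E}^{(k)}\big(\|x_k-x^*\|_2^2+\frac{\gamma_k^2}{\lambda}\|v_k-v^*\|_2^2\big)$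 and $M_1=4C_1\|x^*\|_2^2+2C_2$, $$a_{k+1}\le(1-\nu\gamma_k)a_k+\gamma_k^2M_1\qquad\forall k\ge k_0.$$
   Context: $\mathrm{Prox}_f(y)=\arg\min_x\{f(x)+\frac12\|x-y\|_2^2\}$; $\rho_{\max}(BB^T),\rho_{\min}(BB^T)$ are the largest and smallest eigenvalues of $BB^T$. Fix a batch size $p$ dividing $n$; for $i\in\{1,\dots,n/p\}$, $\nabla f_2^{[i]}(x)=\frac1p\sum_{j=(i-1)p+1}^{ip}\nabla\phi_j(x)$. Algorithm 1: choose $x_1\in\mathbb{R}^d$, $v_1\in\mathbb{R}^m$; for $k=1,2,\dots$: $\gamma_k=c/k^\alpha$; draw $i_k$ from $\{1,\dots,n/p\}$, each with probability $p/n$, independently of the past; $x_{k+1/2}=x_k-\gamma_k\nabla f_2^{[i_k]}(x_k)$; $v_{k+1}=\frac{\lambda}{\gamma_k}\big(I-\mathrm{Prox}_{\frac{\gamma_k}{\lambda}f_1}\big)\big(Bx_{k+1/2}+(I-\lambda BB^T)\frac{\gamma_k}{\lambda}v_k\big)$; $x_{k+1}=x_{k+1/2}-\gamma_kB^Tv_{k+1}$. $\mathbb{E}^{(k)}$ denotes expectation with respect to all random indices drawn up to the $k$-th iterate. *)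

theory Defs
  imports "HOL-Analysis.Analysis" "HOL-Probability.Probability"
begin

definition proper_fun :: "('a \<Rightarrow> ereal) \<Rightarrow> bool" where
  "proper_fun f \<longleftrightarrow> (\<forall>x. f x \<noteq> -\<infinity>) \<and> (\<exists>x. f x \<noteq> \<infinity>)"

(* convexity of an extended-real valued function (convention 0 * \<infinity> = 0) *)
definition ereal_convex :: "('a::real_vector \<Rightarrow> ereal) \<Rightarrow> bool" where
  "ereal_convex f \<longleftrightarrow> (\<forall>x y t. 0 \<le> t \<and> t \<le> 1 \<longrightarrow>
      f ((1 - t) *\<^sub>R x + t *\<^sub>R y) \<le> ereal (1 - t) * f x + ereal t * f y)"

definition lsc_fun :: "('a::topological_space \<Rightarrow> ereal) \<Rightarrow> bool" where
  "lsc_fun f \<longleftrightarrow> (\<forall>x. f x \<le> Liminf (at x) f)"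

definition strongly_convex :: "real \<Rightarrow> ('a::real_normed_vector \<Rightarrow> real) \<Rightarrow> bool" where
  "strongly_convex \<nu> f \<longleftrightarrow> (\<forall>x y t. 0 \<le> t \<and> t \<le> 1 \<longrightarrow>
      f ((1 - t) *\<^sub>R x + t *\<^sub>R y) \<le> (1 - t) * f x + t * f y - \<nu> / 2 * t * (1 - t) * (norm (x - y))\<^sup>2)"

definition prox :: "('a::real_normed_vector \<Rightarrow> ereal) \<Rightarrow> 'a \<Rightarrow> 'a" where
  "prox g y = (SOME x. \<forall>z. g x + ereal ((norm (x - y))\<^sup>2 / 2) \<le> g z + ereal ((norm (z - y))\<^sup>2 / 2))"

definition eigvals :: "real^'n^'n \<Rightarrow> real set" where
  "eigvals A = {c. \<exists>v. v \<noteq> 0 \<and> A *v v = c *\<^sub>R v}"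

definition rho_max :: "real^'n^'n \<Rightarrow> real" where "rho_max A = Max (eigvals A)"
definition rho_min :: "real^'n^'n \<Rightarrow> real" where "rho_min A = Min (eigvals A)"

definition stepsize :: "real \<Rightarrow> real \<Rightarrow> nat \<Rightarrow> real" where
  "stepsize c \<alpha> k = c / (real k powr \<alpha>)"

definition batch_grad :: "nat \<Rightarrow> (nat \<Rightarrow> real^'d \<Rightarrow> real^'d) \<Rightarrow> nat \<Rightarrow> real^'d \<Rightarrow> real^'d" where
  "batch_grad p g i x = (1 / real p) *\<^sub>R (\<Sum>j=(i-1)*p+1..i*p. g j x)"

(* one iteration k of Algorithm 1, with index i = i_k *)
definition alg_step ::
  "(real^'m \<Rightarrow> ereal) \<Rightarrow> real^'d^'m \<Rightarrow> nat \<Rightarrow> (nat \<Rightarrow> real^'d \<Rightarrow> real^'d) \<Rightarrow> real \<Rightarrow> real \<Rightarrow> real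
    \<Rightarrow> nat \<Rightarrow> nat \<Rightarrow> (real^'d) \<times> (real^'m) \<Rightarrow> (real^'d) \<times> (real^'m)" where
  "alg_step f1 B p g c \<alpha> lam k i xv =
     (let x = fst xv; v = snd xv; \<gamma> = stepsize c \<alpha> k;
          xh = x - \<gamma> *\<^sub>R batch_grad p g i x;
          y = B *v xh + (mat 1 - lam *\<^sub>R (B ** transpose B)) *v ((\<gamma> / lam) *\<^sub>R v);
          v' = (lam / \<gamma>) *\<^sub>R (y - prox (\<lambda>z. ereal (\<gamma> / lam) * f1 z) y);
          x' = xh - \<gamma> *\<^sub>R (transpose B *v v')
      in (x', v'))"

(* alg ... \<omega> k = (x_k, v_k) for k \<ge> 1, where \<omega> j = i_j; alg ... 0 is unused *)
fun alg ::
  "(real^'m \<Rightarrow> ereal) \<Rightarrow> real^'d^'m \<Rightarrow> nat \<Rightarrow> (nat \<Rightarrow> real^'d \<Rightarrow> real^'d) \<Rightarrow> real \<Rightarrow> real \<Rightarrow> real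
    \<Rightarrow> real^'d \<Rightarrow> real^'m \<Rightarrow> (nat \<Rightarrow> nat) \<Rightarrow> nat \<Rightarrow> (real^'d) \<times> (real^'m)" where
  "alg f1 B p g c \<alpha> lam x1 v1 \<omega> 0 = (x1, v1)"
| "alg f1 B p g c \<alpha> lam x1 v1 \<omega> (Suc k) =
     (if k = 0 then (x1, v1)
      else alg_step f1 B p g c \<alpha> lam k (\<omega> k) (alg f1 B p g c \<alpha> lam x1 v1 \<omega> k))"

(* E^{(k)}: expectation over the independent uniform indices i_1, ..., i_{k-1}
   (each uniform on {1..n/p}), i.e. all indices drawn before the k-th iterate *)
definition Ek :: "nat \<Rightarrow> nat \<Rightarrow> nat \<Rightarrow> ((nat \<Rightarrow> nat) \<Rightarrow> real) \<Rightarrow> real" where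
  "Ek n p k F = measure_pmf.expectation (Pi_pmf {1..<k} 1 (\<lambda>_. pmf_of_set {1..n div p})) F"

end

theory Submission
  imports Defs
begin

(* One iteration is a stochastic gradient step x_{k+1/2} = x_k - g_k G_k followed by a proximal
   primal-dual step. The new dual iterate v_{k+1} and the fixed point vs are subgradients of f1 at
   the two prox points, so monotonicity of the subdifferential, together with lam rho_max(BB^T) < 1,
   gives the deterministic estimate
     |x_{k+1} - xs|^2 + g_k^2/lam |v_{k+1} - vs|^2
       <= |x_{k+1/2} - (xs - g_k grad f2 xs)|^2 + g_k^2/lam (1 - lam rho_min) |v_k - vs|^2.
   Averaging over the fresh index i_k, the mini-batch gradients are unbiased, so the first term
   splits into the exact gradient step, contracted by strong convexity and cocoercivity of grad f2,
   plus g_k^2 times the variance, which the hypothesis bounds by C1 |x_k|^2 + C2 with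
   |x_k|^2 <= 2 |x_k - xs|^2 + 2 |xs|^2. The step-size condition turns both coefficients into
   1 - nu g_k, and g_{k+1} <= g_k. *)

section \<open>Smooth convex functions\<close>

lemma has_real_derivative_along_line:
  fixes f :: "'a::real_inner \<Rightarrow> real"
  assumes "\<And>x. (f has_derivative (\<lambda>h. G x \<bullet> h)) (at x)"
  shows "((\<lambda>t. f (x + t *\<^sub>R u)) has_real_derivative (G (x + t *\<^sub>R u) \<bullet> u)) (at t)"
proof -
  have "((\<lambda>t. x + t *\<^sub>R u) has_derivative (\<lambda>t. t *\<^sub>R u)) (at t)"
    by (auto intro!: derivative_eq_intros)
  from has_derivative_compose[OF this assms]
  have "((\<lambda>t. f (x + t *\<^sub>R u)) has_derivative (\<lambda>s. G (x + t *\<^sub>R u) \<bullet> (s *\<^sub>R u))) (at t)"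
    by simp
  then show ?thesis unfolding has_field_derivative_def
    by (rule has_derivative_eq_rhs) (auto simp: fun_eq_iff inner_scaleR_right)
qed

lemma strongly_convex_gradient_ineq:
  fixes f :: "'a::real_inner \<Rightarrow> real"
  assumes deriv: "\<And>x. (f has_derivative (\<lambda>h. G x \<bullet> h)) (at x)"
    and sc: "strongly_convex \<nu> f"
  shows "f x + G x \<bullet> (y - x) + \<nu> / 2 * (norm (y - x))\<^sup>2 \<le> f y"
proof -
  define q where "q t = (f (x + t *\<^sub>R (y - x)) - f x) / t" for t
  have "((\<lambda>t. f (x + t *\<^sub>R (y - x))) has_real_derivative (G x \<bullet> (y - x))) (at 0)"
    using has_real_derivative_along_line[OF deriv, where x=x and t=0 and u="y - x"] by simp
  then have "(q \<longlongrightarrow> G x \<bullet> (y - x)) (at 0)"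
    unfolding q_def by (simp add: has_field_derivative_iff)
  then have lim_q: "(q \<longlongrightarrow> G x \<bullet> (y - x)) (at_right 0)"
    by (rule filterlim_mono) (auto simp: at_le)
  have lim_bound: "((\<lambda>t. f y - f x - \<nu> / 2 * (1 - t) * (norm (x - y))\<^sup>2)
      \<longlongrightarrow> f y - f x - \<nu> / 2 * (1 - 0) * (norm (x - y))\<^sup>2) (at_right 0)"
    by (intro tendsto_intros)
  have "\<forall>\<^sub>F t in at_right 0. q t \<le> f y - f x - \<nu> / 2 * (1 - t) * (norm (x - y))\<^sup>2"
    unfolding eventually_at_right_field
  proof (intro exI[of _ 1] conjI allI impI)
    fix t :: real assume t: "0 < t" "t < 1"
    have "f ((1 - t) *\<^sub>R x + t *\<^sub>R y) \<le> (1 - t) * f x + t * f y - \<nu> / 2 * t * (1 - t) * (norm (x - y))\<^sup>2"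
      using sc t unfolding strongly_convex_def by auto
    moreover have "(1 - t) *\<^sub>R x + t *\<^sub>R y = x + t *\<^sub>R (y - x)" by (simp add: algebra_simps)
    ultimately have "f (x + t *\<^sub>R (y - x)) - f x \<le> t * (f y - f x - \<nu> / 2 * (1 - t) * (norm (x - y))\<^sup>2)"
      by (simp add: algebra_simps)
    then show "q t \<le> f y - f x - \<nu> / 2 * (1 - t) * (norm (x - y))\<^sup>2"
      using t by (simp add: q_def divide_simps mult.commute)
  qed simp
  from tendsto_le[OF _ lim_bound lim_q this] show ?thesis
    by (simp add: norm_minus_commute)
qed

lemma strongly_convex_gradient_monotone:
  fixes f :: "'a::real_inner \<Rightarrow> real"
  assumes "\<And>x. (f has_derivative (\<lambda>h. G x \<bullet> h)) (at x)" and "strongly_convex \<nu> f"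
  shows "\<nu> * (norm (x - y))\<^sup>2 \<le> (G x - G y) \<bullet> (x - y)"
proof -
  have "f y + G y \<bullet> (x - y) + \<nu> / 2 * (norm (x - y))\<^sup>2 \<le> f x"
    by (rule strongly_convex_gradient_ineq[OF assms])
  moreover have "f x + G x \<bullet> (y - x) + \<nu> / 2 * (norm (y - x))\<^sup>2 \<le> f y"
    by (rule strongly_convex_gradient_ineq[OF assms])
  moreover have "G x \<bullet> (y - x) = - (G x \<bullet> (x - y))" by (simp add: inner_diff_right)
  moreover have "norm (y - x) = norm (x - y)" by (rule norm_minus_commute)
  ultimately show ?thesis by (simp add: inner_diff_left)
qed

lemma lipschitz_gradient_upper_bound:
  fixes f :: "'a::real_inner \<Rightarrow> real"
  assumes deriv: "\<And>x. (f has_derivative (\<lambda>h. G x \<bullet> h)) (at x)"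
    and lip: "L-lipschitz_on UNIV G"
  shows "f z \<le> f y + G y \<bullet> (z - y) + L * (norm (z - y))\<^sup>2"
proof -
  define h where "h t = f (y + t *\<^sub>R (z - y)) - t * (G y \<bullet> (z - y))" for t
  define h' where "h' t = (G (y + t *\<^sub>R (z - y)) - G y) \<bullet> (z - y)" for t
  have "(h has_real_derivative h' t) (at t)" for t
    unfolding h_def h'_def using has_real_derivative_along_line[OF deriv, where x=y and t=t and u="z - y"]
    by (auto intro!: derivative_eq_intros simp: inner_diff_left)
  then obtain \<xi> where \<xi>: "0 < \<xi>" "\<xi> < 1" "h 1 - h 0 = h' \<xi>"
    using MVT2[of 0 1 h h'] by auto
  have L: "0 \<le> L" using lip by (auto simp: lipschitz_on_def)
  have "h' \<xi> \<le> norm (G (y + \<xi> *\<^sub>R (z - y)) - G y) * norm (z - y)"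
    unfolding h'_def by (rule norm_cauchy_schwarz)
  also have "\<dots> \<le> L * norm (\<xi> *\<^sub>R (z - y)) * norm (z - y)"
    using lip unfolding lipschitz_on_def dist_norm
    by (intro mult_right_mono) (metis UNIV_I add_diff_cancel_left', simp)
  also have "\<dots> = L * \<xi> * (norm (z - y))\<^sup>2"
    using \<xi> by (simp add: power2_eq_square)
  also have "\<dots> \<le> L * (norm (z - y))\<^sup>2"
    using \<xi> L by (simp add: mult_right_mono mult_left_le)
  finally show ?thesis using \<xi> unfolding h_def by (simp add: algebra_simps)
qed

lemma lipschitz_gradient_cocoercive:
  fixes f :: "'a::real_inner \<Rightarrow> real"
  assumes deriv: "\<And>x. (f has_derivative (\<lambda>h. G x \<bullet> h)) (at x)"
    and convex: "\<And>x y. f x + G x \<bullet> (y - x) \<le> f y"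
    and lip: "L-lipschitz_on UNIV G" and L: "0 < L"
  shows "(norm (G x - G y))\<^sup>2 / (2 * L) \<le> (G x - G y) \<bullet> (x - y)"
proof -
  have gain: "f a + G a \<bullet> (b - a) + (norm (G b - G a))\<^sup>2 / (4 * L) \<le> f b" for a b
  proof -
    \<comment> \<open>compare both sides at the point reached from \<open>b\<close> by a gradient step of length \<open>1 / (2 L)\<close>\<close>
    define g where "g = G b - G a"
    define s where "s = 1 / (2 * L)"
    define z where "z = b - s *\<^sub>R g"
    have "f a + G a \<bullet> (z - a) \<le> f z" by (rule convex)
    moreover have "f z \<le> f b + G b \<bullet> (z - b) + L * (norm (z - b))\<^sup>2"
      by (rule lipschitz_gradient_upper_bound[OF deriv lip])
    moreover have "G a \<bullet> (z - a) = G a \<bullet> (b - a) - s * (G a \<bullet> g)"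
      by (simp add: z_def algebra_simps inner_diff_right)
    moreover have "G b \<bullet> (z - b) = - s * (G b \<bullet> g)"
      by (simp add: z_def inner_diff_right)
    moreover have "(norm (z - b))\<^sup>2 = s\<^sup>2 * (norm g)\<^sup>2"
      by (simp add: z_def power_mult_distrib)
    moreover have "G b \<bullet> g - G a \<bullet> g = (norm g)\<^sup>2"
      by (simp add: g_def power2_norm_eq_inner inner_diff_left)
    ultimately have "f a + G a \<bullet> (b - a) \<le> f b - s * (norm g)\<^sup>2 + L * s\<^sup>2 * (norm g)\<^sup>2"
      by (simp add: algebra_simps)
    moreover have "- s * (norm g)\<^sup>2 + L * s\<^sup>2 * (norm g)\<^sup>2 = - (norm g)\<^sup>2 / (4 * L)"
      using L by (simp add: s_def field_simps power2_eq_square)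
    ultimately show ?thesis by (simp add: g_def)
  qed
  have "f x + G x \<bullet> (y - x) + (norm (G y - G x))\<^sup>2 / (4 * L) \<le> f y" by (rule gain)
  moreover have "f y + G y \<bullet> (x - y) + (norm (G x - G y))\<^sup>2 / (4 * L) \<le> f x" by (rule gain)
  moreover have "norm (G y - G x) = norm (G x - G y)" by (rule norm_minus_commute)
  moreover have "G y \<bullet> (x - y) = - (G y \<bullet> (y - x))" by (simp add: inner_diff_right)
  ultimately show ?thesis by (simp add: inner_diff_left inner_diff_right field_simps)
qed

lemma gradient_step_contraction:
  fixes f :: "'a::real_inner \<Rightarrow> real"
  assumes deriv: "\<And>x. (f has_derivative (\<lambda>h. G x \<bullet> h)) (at x)"
    and sc: "strongly_convex \<nu> f" and \<nu>: "0 \<le> \<nu>"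
    and lip: "(1 / \<beta>)-lipschitz_on UNIV G" and \<beta>: "0 < \<beta>"
    and \<gamma>: "0 \<le> \<gamma>" "\<gamma> \<le> \<beta>"
  shows "(norm ((x - y) - \<gamma> *\<^sub>R (G x - G y)))\<^sup>2 \<le> (1 - 2 * \<nu> * \<gamma> * (1 - \<gamma> / \<beta>)) * (norm (x - y))\<^sup>2"
proof -
  define s where "s = (G x - G y) \<bullet> (x - y)"
  have convex: "f a + G a \<bullet> (b - a) \<le> f b" for a b
  proof -
    have "0 \<le> \<nu> / 2 * (norm (b - a))\<^sup>2" using \<nu> by simp
    with strongly_convex_gradient_ineq[OF deriv sc, of a b] show ?thesis by linarith
  qed
  have "(norm (G x - G y))\<^sup>2 / (2 * (1 / \<beta>)) \<le> s"
    unfolding s_def using \<beta> by (intro lipschitz_gradient_cocoercive[OF deriv convex lip]) simp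
  then have cocoercive: "\<gamma>\<^sup>2 * (norm (G x - G y))\<^sup>2 \<le> \<gamma>\<^sup>2 * (2 / \<beta> * s)"
    using \<beta> by (intro mult_left_mono) (simp_all add: field_simps)
  define w where "w = 2 * \<gamma> * (1 - \<gamma> / \<beta>)"
  have "\<gamma> / \<beta> \<le> 1" using \<gamma> \<beta> by simp
  then have w: "0 \<le> w" using \<gamma> by (simp add: w_def)
  have "(norm ((x - y) - \<gamma> *\<^sub>R (G x - G y)))\<^sup>2
      = (norm (x - y))\<^sup>2 - 2 * \<gamma> * s + \<gamma>\<^sup>2 * (norm (G x - G y))\<^sup>2"
    unfolding s_def power2_norm_eq_inner
    by (simp add: inner_diff_left inner_diff_right inner_commute power2_eq_square algebra_simps)
  also have "\<dots> \<le> (norm (x - y))\<^sup>2 - 2 * \<gamma> * s + \<gamma>\<^sup>2 * (2 / \<beta> * s)"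
    using cocoercive by linarith
  also have "\<dots> = (norm (x - y))\<^sup>2 - w * s"
    by (simp add: w_def power2_eq_square algebra_simps)
  also have "\<dots> \<le> (norm (x - y))\<^sup>2 - w * (\<nu> * (norm (x - y))\<^sup>2)"
    using mult_left_mono[OF strongly_convex_gradient_monotone[OF deriv sc, of x y] w]
    by (simp add: s_def)
  also have "\<dots> = (1 - 2 * \<nu> * \<gamma> * (1 - \<gamma> / \<beta>)) * (norm (x - y))\<^sup>2"
    by (simp add: w_def algebra_simps)
  finally show ?thesis .
qed

section \<open>Eigenvalue bounds for \<open>B B\<^sup>T\<close>\<close>

lemma inner_symmetric_matrix:
  fixes A :: "real^'n^'n"
  assumes "transpose A = A"
  shows "z \<bullet> (A *v w) = (A *v z) \<bullet> w"
proof -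
  have "z \<bullet> (A *v w) = (z v* A) \<bullet> w" by (simp add: dot_lmul_matrix)
  also have "z v* A = transpose A *v z" by simp
  finally show ?thesis using assms by simp
qed

lemma finite_eigvals_symmetric:
  fixes A :: "real^'n^'n"
  assumes sym: "transpose A = A"
  shows "finite (eigvals A)"
proof -
  define e where "e c = (SOME v. v \<noteq> 0 \<and> A *v v = c *\<^sub>R v)" for c
  have e: "e c \<noteq> 0 \<and> A *v e c = c *\<^sub>R e c" if "c \<in> eigvals A" for c
    using that unfolding eigvals_def e_def by (rule CollectE) (rule someI_ex)
  have orth: "e c \<bullet> e d = 0" if "c \<in> eigvals A" "d \<in> eigvals A" "c \<noteq> d" for c d
  proof -
    have "c * (e c \<bullet> e d) = (A *v e c) \<bullet> e d" using e[OF that(1)] by simp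
    also have "\<dots> = e c \<bullet> (A *v e d)" using inner_symmetric_matrix[OF sym] by simp
    also have "\<dots> = d * (e c \<bullet> e d)" using e[OF that(2)] by simp
    finally show ?thesis using that(3) by simp
  qed
  have "inj_on e (eigvals A)"
  proof
    fix c d assume cd: "c \<in> eigvals A" "d \<in> eigvals A" "e c = e d"
    show "c = d"
    proof (rule ccontr)
      assume "c \<noteq> d"
      then have "e c \<bullet> e c = 0" using orth[OF cd(1,2)] cd(3) by simp
      then show False using e[OF cd(1)] by simp
    qed
  qed
  moreover have "independent (e ` eigvals A)"
  proof (rule pairwise_orthogonal_independent)
    show "pairwise orthogonal (e ` eigvals A)"
      unfolding pairwise_def orthogonal_def using orth by auto
    show "0 \<notin> e ` eigvals A" using e by auto
  qed
  ultimately show ?thesis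
    using finiteI_independent finite_imageD by blast
qed

lemma quadratic_form_maximizer_eigenvector:
  fixes A :: "real^'n^'n"
  assumes sym: "transpose A = A" and x: "norm x = 1"
    and max: "\<And>z. z \<bullet> (A *v z) \<le> (x \<bullet> (A *v x)) * (norm z)\<^sup>2"
  shows "A *v x = (x \<bullet> (A *v x)) *\<^sub>R x"
proof -
  define \<mu> where "\<mu> = x \<bullet> (A *v x)"
  define g where "g z = z \<bullet> (A *v z) - \<mu> * (z \<bullet> z)" for z
  have g_le: "g z \<le> 0" for z
    using max[of z] by (simp add: g_def \<mu>_def power2_norm_eq_inner)
  define w where "w = A *v x - \<mu> *\<^sub>R x"
  \<comment> \<open>\<open>x\<close> maximizes \<open>g\<close>, so \<open>g\<close> cannot increase to first order in the direction \<open>w\<close>\<close>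
  have expand: "g (x + t *\<^sub>R w) = 2 * t * (w \<bullet> w) + t\<^sup>2 * g w" for t
  proof -
    have "x \<bullet> x = 1" using x by (simp add: power2_norm_eq_inner[symmetric])
    moreover have "(A *v x) \<bullet> w = w \<bullet> w + \<mu> * (x \<bullet> w)" by (simp add: w_def inner_diff_left)
    moreover have "x \<bullet> (A *v w) = (A *v x) \<bullet> w" by (rule inner_symmetric_matrix[OF sym])
    ultimately show ?thesis
      by (simp add: g_def \<mu>_def matrix_vector_right_distrib matrix_vector_mult_scaleR inner_add_left
          inner_add_right power2_eq_square algebra_simps inner_commute)
  qed
  have "w \<bullet> w \<le> 0"
  proof (rule ccontr)
    assume "\<not> w \<bullet> w \<le> 0"
    then have pos: "w \<bullet> w > 0" by linarith
    define c where "c = - g w"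
    have c: "c \<ge> 0" using g_le[of w] by (simp add: c_def)
    define t where "t = (w \<bullet> w) / (c + 1)"
    have t: "t > 0" using pos c by (simp add: t_def)
    have "2 * t * (w \<bullet> w) \<le> t\<^sup>2 * c" using g_le[of "x + t *\<^sub>R w"] expand[of t] by (simp add: c_def)
    then have "2 * (w \<bullet> w) \<le> t * c" using t by (simp add: power2_eq_square)
    also have "t * c = (w \<bullet> w) * (c / (c + 1))" by (simp add: t_def)
    also have "\<dots> \<le> w \<bullet> w" using pos c by (intro mult_left_le) auto
    finally show False using pos by simp
  qed
  then have "w = 0" by (metis inner_gt_zero_iff not_le)
  then show ?thesis by (simp add: w_def \<mu>_def)
qed

lemma symmetric_quadratic_form_le_eigval:
  fixes A :: "real^'n^'n"
  assumes sym: "transpose A = A"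
  shows "\<exists>\<mu>\<in>eigvals A. \<forall>z. z \<bullet> (A *v z) \<le> \<mu> * (norm z)\<^sup>2"
proof -
  define q where "q z = z \<bullet> (A *v z)" for z :: "real^'n"
  obtain i :: 'n where True by simp
  have "axis i 1 \<in> sphere (0::real^'n) 1" by simp
  moreover have "continuous_on (sphere 0 1) q"
    unfolding q_def by (intro continuous_intros)
  ultimately obtain x where x: "x \<in> sphere 0 1" and x_max: "\<And>y. y \<in> sphere 0 1 \<Longrightarrow> q y \<le> q x"
    using continuous_attains_sup[OF compact_sphere] by blast
  have bound: "q z \<le> q x * (norm z)\<^sup>2" for z
  proof (cases "z = 0")
    case True then show ?thesis by (simp add: q_def)
  next
    case False
    define u where "u = (1 / norm z) *\<^sub>R z"
    have "q u \<le> q x" using False by (intro x_max) (simp add: u_def)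
    moreover have "q z = (norm z)\<^sup>2 * q u"
      using False by (simp add: u_def q_def power2_eq_square matrix_vector_mult_scaleR)
    ultimately show ?thesis
      by (metis mult.commute mult_left_mono zero_le_power2)
  qed
  have "norm x = 1" using x by simp
  from quadratic_form_maximizer_eigenvector[OF sym this] bound
  have "A *v x = q x *\<^sub>R x" by (simp add: q_def)
  moreover have "x \<noteq> 0" using x by auto
  ultimately have "q x \<in> eigvals A" unfolding eigvals_def by blast
  then show ?thesis using bound unfolding q_def by blast
qed

lemma symmetric_quadratic_form_ge_eigval:
  fixes A :: "real^'n^'n"
  assumes sym: "transpose A = A"
  shows "\<exists>\<mu>\<in>eigvals A. \<forall>z. \<mu> * (norm z)\<^sup>2 \<le> z \<bullet> (A *v z)"
proof -
  have neg: "(- A) *v z = - (A *v z)" for z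
    by (simp add: matrix_vector_mult_def vec_eq_iff sum_negf)
  have "transpose (- A) = - A" using sym by (simp add: transpose_def vec_eq_iff)
  then obtain \<mu> where "\<mu> \<in> eigvals (- A)" and \<mu>: "\<forall>z. z \<bullet> (- A *v z) \<le> \<mu> * (norm z)\<^sup>2"
    using symmetric_quadratic_form_le_eigval by blast
  then have "- \<mu> \<in> eigvals A" unfolding eigvals_def neg
    by (auto simp: neg) (metis minus_equation_iff scaleR_minus_left)
  moreover have "\<forall>z. - \<mu> * (norm z)\<^sup>2 \<le> z \<bullet> (A *v z)"
    using \<mu> by (simp add: neg) (metis minus_le_iff)
  ultimately show ?thesis by blast
qed

lemma quadratic_form_mult_transpose:
  fixes B :: "real^'d^'m"
  shows "z \<bullet> ((B ** transpose B) *v z) = (norm (transpose B *v z))\<^sup>2"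
proof -
  have "z \<bullet> ((B ** transpose B) *v z) = (z v* B) \<bullet> (transpose B *v z)"
    by (simp add: matrix_vector_mul_assoc[symmetric] dot_lmul_matrix)
  then show ?thesis by (simp add: power2_norm_eq_inner)
qed

lemma norm_transpose_mult_bounds:
  fixes B :: "real^'d^'m"
  shows "(norm (transpose B *v z))\<^sup>2 \<le> rho_max (B ** transpose B) * (norm z)\<^sup>2"
    and "rho_min (B ** transpose B) * (norm z)\<^sup>2 \<le> (norm (transpose B *v z))\<^sup>2"
proof -
  define A where "A = B ** transpose B"
  have sym: "transpose A = A" by (simp add: A_def matrix_transpose_mul)
  have fin: "finite (eigvals A)" by (rule finite_eigvals_symmetric[OF sym])
  obtain \<mu> where "\<mu> \<in> eigvals A" "\<forall>z. z \<bullet> (A *v z) \<le> \<mu> * (norm z)\<^sup>2"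
    using symmetric_quadratic_form_le_eigval[OF sym] by blast
  moreover from this have "\<mu> \<le> rho_max A" unfolding rho_max_def using fin by simp
  ultimately show "(norm (transpose B *v z))\<^sup>2 \<le> rho_max (B ** transpose B) * (norm z)\<^sup>2"
    using quadratic_form_mult_transpose[of z B] mult_right_mono[of \<mu> "rho_max A" "(norm z)\<^sup>2"]
    unfolding A_def by (metis zero_le_power2 order_trans)
  obtain \<mu>' where "\<mu>' \<in> eigvals A" "\<forall>z. \<mu>' * (norm z)\<^sup>2 \<le> z \<bullet> (A *v z)"
    using symmetric_quadratic_form_ge_eigval[OF sym] by blast
  moreover from this have "rho_min A \<le> \<mu>'" unfolding rho_min_def using fin by simp
  ultimately show "rho_min (B ** transpose B) * (norm z)\<^sup>2 \<le> (norm (transpose B *v z))\<^sup>2"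
    using quadratic_form_mult_transpose[of z B] mult_right_mono[of "rho_min A" \<mu>' "(norm z)\<^sup>2"]
    unfolding A_def by (metis zero_le_power2 order_trans)
qed

section \<open>The proximity operator\<close>

lemma lsc_fun_eventually_gt:
  fixes f :: "'a::metric_space \<Rightarrow> ereal"
  assumes lsc: "lsc_fun f" and c: "c < f x"
  shows "\<exists>e>0. \<forall>y. dist y x < e \<longrightarrow> c < f y"
proof -
  have "c < Liminf (at x) f" using lsc c unfolding lsc_fun_def by (metis order_less_le_trans)
  then obtain e where e: "e > 0" "c < (INF y\<in>ball x e - {x}. f y)"
    unfolding Liminf_at less_SUP_iff by auto
  have "c < f y" if "dist y x < e" for y
  proof (cases "y = x")
    case False
    then have "y \<in> ball x e - {x}" using that by (simp add: dist_commute)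
    with e(2) show ?thesis by (rule less_INF_D)
  qed (use c in simp)
  with e(1) show ?thesis by blast
qed

lemma lsc_fun_sequentially_gt:
  fixes f :: "'a::metric_space \<Rightarrow> ereal"
  assumes "lsc_fun f" "c < f x" "u \<longlonglongrightarrow> x"
  shows "\<forall>\<^sub>F n in sequentially. c < f (u n)"
proof -
  obtain e where e: "e > 0" "\<forall>y. dist y x < e \<longrightarrow> c < f y"
    using lsc_fun_eventually_gt[OF assms(1,2)] by blast
  have "\<forall>\<^sub>F n in sequentially. dist (u n) x < e" using assms(3) e(1) by (rule tendstoD)
  then show ?thesis by eventually_elim (use e in auto)
qed

lemma ereal_convex_finite:
  fixes f :: "'a::real_vector \<Rightarrow> ereal"
  assumes "ereal_convex f" "f x = ereal r" "f y = ereal s" "0 \<le> t" "t \<le> 1"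
  shows "f ((1 - t) *\<^sub>R x + t *\<^sub>R y) \<le> ereal ((1 - t) * r + t * s)"
  using assms unfolding ereal_convex_def by (metis times_ereal.simps(1) plus_ereal.simps(1))

lemma ereal_convex_lsc_affine_minorant:
  fixes f :: "'a::real_normed_vector \<Rightarrow> ereal"
  assumes lsc: "lsc_fun f" and convex: "ereal_convex f" and not_minf: "\<And>x. f x \<noteq> -\<infinity>"
    and u0: "f u0 = ereal r0"
  shows "\<exists>K\<ge>0. \<forall>u. ereal (r0 - 1 - K * norm (u - u0)) \<le> f u"
proof -
  obtain e where e: "e > 0" "\<And>y. dist y u0 < e \<Longrightarrow> ereal (r0 - 1) < f y"
    using lsc_fun_eventually_gt[OF lsc, of "ereal (r0 - 1)" u0] u0 by auto
  have "ereal (r0 - 1 - 2 / e * norm (u - u0)) \<le> f u" for u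
  proof (cases "norm (u - u0) < e")
    case True
    then have "ereal (r0 - 1) \<le> f u" using e by (simp add: dist_norm less_imp_le)
    moreover have "r0 - 1 - 2 / e * norm (u - u0) \<le> r0 - 1" using e by simp
    ultimately show ?thesis by (meson ereal_less_eq(3) order_trans)
  next
    case far: False
    \<comment> \<open>the point at distance \<open>e / 2\<close> from \<open>u0\<close> towards \<open>u\<close> lies in the neighbourhood\<close>
    define R where "R = norm (u - u0)"
    define t where "t = e / (2 * R)"
    have R: "0 < R" "e \<le> R" using far e by (auto simp: R_def)
    have t: "0 < t" "t \<le> 1" "t * R = e / 2" using R e by (auto simp: t_def field_simps)
    show ?thesis
    proof (cases "f u")
      case (real s)
      have "dist ((1 - t) *\<^sub>R u0 + t *\<^sub>R u) u0 = t * R"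
        using t by (simp add: dist_norm R_def algebra_simps flip: scaleR_diff_right)
      then have "ereal (r0 - 1) < f ((1 - t) *\<^sub>R u0 + t *\<^sub>R u)"
        using e t by (intro e(2)) simp
      also have "\<dots> \<le> ereal ((1 - t) * r0 + t * s)"
        using t by (intro ereal_convex_finite[OF convex u0 real]) auto
      finally have "r0 - 1 / t < s"
        using t by (simp add: field_simps)
      moreover have "1 / t = 2 / e * R" using R e by (simp add: t_def)
      ultimately show ?thesis using real by (simp add: R_def)
    qed (use not_minf in auto)
  qed
  then show ?thesis using e(1) by (intro exI[of _ "2 / e"]) auto
qed

lemma norm_add_square_le:
  fixes a b :: "'a::real_normed_vector"
  shows "(norm (a + b))\<^sup>2 \<le> 2 * (norm a)\<^sup>2 + 2 * (norm b)\<^sup>2"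
proof -
  have "(norm (a + b))\<^sup>2 \<le> (norm a + norm b)\<^sup>2"
    by (intro power_mono norm_triangle_ineq) simp
  also have "\<dots> \<le> 2 * (norm a)\<^sup>2 + 2 * (norm b)\<^sup>2"
    using zero_le_power2[of "norm a - norm b"] by (simp add: power2_eq_square algebra_simps)
  finally show ?thesis .
qed

lemma prox_objective_lower_bound:
  fixes f :: "'a::real_normed_vector \<Rightarrow> ereal"
  assumes "proper_fun f" "ereal_convex f" "lsc_fun f" and a: "0 < a" and b: "0 < b"
  shows "\<exists>\<alpha> \<beta>. 0 \<le> \<beta> \<and> (\<forall>z. ereal (\<alpha> - \<beta> * norm z + (norm z)\<^sup>2 / 4)
                              \<le> ereal a * f (b *\<^sub>R z) + ereal ((norm (z - y))\<^sup>2 / 2))"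
proof -
  have not_minf: "\<And>x. f x \<noteq> -\<infinity>" using assms(1) by (simp add: proper_fun_def)
  obtain u0 where "f u0 \<noteq> \<infinity>" using assms(1) by (auto simp: proper_fun_def)
  then obtain r0 where u0: "f u0 = ereal r0" using not_minf[of u0] by (cases "f u0") auto
  obtain K where K: "K \<ge> 0" "\<And>u. ereal (r0 - 1 - K * norm (u - u0)) \<le> f u"
    using ereal_convex_lsc_affine_minorant[OF assms(3,2) not_minf u0] by blast
  define \<alpha> where "\<alpha> = a * (r0 - 1) - a * K * norm u0 - (norm y)\<^sup>2 / 2"
  have "ereal (\<alpha> - a * K * b * norm z + (norm z)\<^sup>2 / 4) \<le> ereal a * f (b *\<^sub>R z) + ereal ((norm (z - y))\<^sup>2 / 2)"
    for z
  proof -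
    have "norm (b *\<^sub>R z - u0) \<le> b * norm z + norm u0"
      using norm_triangle_ineq4[of "b *\<^sub>R z" u0] b by simp
    then have "a * K * norm (b *\<^sub>R z - u0) \<le> a * K * (b * norm z + norm u0)"
      using a K(1) by (intro mult_left_mono) auto
    moreover have "(norm z)\<^sup>2 \<le> 2 * (norm (z - y))\<^sup>2 + 2 * (norm y)\<^sup>2"
      using norm_add_square_le[of "z - y" y] by simp
    ultimately have le: "\<alpha> - a * K * b * norm z + (norm z)\<^sup>2 / 4
        \<le> a * (r0 - 1 - K * norm (b *\<^sub>R z - u0)) + (norm (z - y))\<^sup>2 / 2"
      by (simp add: \<alpha>_def algebra_simps)
    have "ereal (a * (r0 - 1 - K * norm (b *\<^sub>R z - u0)) + (norm (z - y))\<^sup>2 / 2) \<le> ereal a * f (b *\<^sub>R z) + ereal ((norm (z - y))\<^sup>2 / 2)"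
    proof -
      have "ereal a * ereal (r0 - 1 - K * norm (b *\<^sub>R z - u0)) \<le> ereal a * f (b *\<^sub>R z)"
        using K(2) a by (intro ereal_mult_left_mono) auto
      then show ?thesis by (metis add_right_mono plus_ereal.simps(1) times_ereal.simps(1))
    qed
    with le show ?thesis by (meson ereal_less_eq(3) order_trans)
  qed
  then show ?thesis using a b K(1) by (intro exI[of _ \<alpha>] exI[of _ "a * K * b"]) auto
qed

lemma prox_objective_lsc:
  fixes f :: "'a::real_normed_vector \<Rightarrow> ereal"
  assumes lsc: "lsc_fun f" and not_minf: "\<And>x. f x \<noteq> -\<infinity>" and a: "0 < a"
    and u: "u \<longlonglongrightarrow> l" and t: "t \<longlonglongrightarrow> T"
    and le: "\<And>n. ereal a * f (b *\<^sub>R u n) + ereal ((norm (u n - y))\<^sup>2 / 2) \<le> ereal (t n)"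
  shows "ereal a * f (b *\<^sub>R l) + ereal ((norm (l - y))\<^sup>2 / 2) \<le> ereal T"
proof (rule ccontr)
  define d where "d z = (norm (z - y))\<^sup>2 / 2" for z
  assume "\<not> ?thesis"
  then have gt: "ereal T < ereal a * f (b *\<^sub>R l) + ereal (d l)" by (simp add: d_def)
  have "ereal ((T - d l) / a) < f (b *\<^sub>R l)"
  proof (cases "f (b *\<^sub>R l)")
    case (real s)
    then show ?thesis using gt a by (simp add: field_simps)
  qed (use not_minf in auto)
  then obtain c where c: "ereal ((T - d l) / a) < ereal c" "ereal c < f (b *\<^sub>R l)"
    using ereal_dense2 by blast
  define \<epsilon> where "\<epsilon> = a * c + d l - T"
  have \<epsilon>: "0 < \<epsilon>" using c(1) a by (simp add: \<epsilon>_def field_simps)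
  have "(\<lambda>n. b *\<^sub>R u n) \<longlonglongrightarrow> b *\<^sub>R l" using u by (intro tendsto_intros)
  from lsc_fun_sequentially_gt[OF lsc c(2) this]
  have "\<forall>\<^sub>F n in sequentially. ereal c < f (b *\<^sub>R u n)" .
  moreover have "(\<lambda>n. d (u n)) \<longlonglongrightarrow> d l" unfolding d_def using u by (intro tendsto_intros) auto
  then have "\<forall>\<^sub>F n in sequentially. d l - \<epsilon> / 2 < d (u n)" using \<epsilon> by (intro order_tendstoD(1)) auto
  moreover have "\<forall>\<^sub>F n in sequentially. t n < T + \<epsilon> / 2" using t \<epsilon> by (intro order_tendstoD(2)) auto
  ultimately have "\<forall>\<^sub>F n in sequentially. ereal c < f (b *\<^sub>R u n) \<and> d l - \<epsilon> / 2 < d (u n) \<and> t n < T + \<epsilon> / 2"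
    by eventually_elim blast
  then obtain n where n: "ereal c < f (b *\<^sub>R u n)" "d l - \<epsilon> / 2 < d (u n)" "t n < T + \<epsilon> / 2"
    by (auto simp: eventually_sequentially)
  show False
  proof (cases "f (b *\<^sub>R u n)")
    case (real s)
    then have "a * c < a * s" using n(1) a by simp
    moreover have "a * c + d l = T + \<epsilon>" by (simp add: \<epsilon>_def)
    ultimately have "t n < a * s + d (u n)" using n(2,3) by linarith
    then show False using le[of n] real by (simp add: d_def)
  qed (use le[of n] a not_minf in auto)
qed

lemma quadratic_growth_bound:
  fixes \<alpha> \<beta> q r :: real
  assumes "\<alpha> - \<beta> * r + r\<^sup>2 / 4 \<le> q"
  shows "r \<le> 2 * (1 + \<beta> + \<beta>\<^sup>2 + \<bar>q - \<alpha>\<bar>)"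
proof -
  define x where "x = r / 2 - \<beta>"
  have "x\<^sup>2 = r\<^sup>2 / 4 - \<beta> * r + \<beta>\<^sup>2"
    by (simp add: x_def power2_eq_square algebra_simps)
  then have "x\<^sup>2 \<le> \<bar>q - \<alpha>\<bar> + \<beta>\<^sup>2"
    using assms abs_ge_self[of "q - \<alpha>"] by simp
  moreover have "x \<le> 1 + x\<^sup>2"
    using zero_le_power2[of "x - 1/2"] by (simp add: power2_eq_square algebra_simps)
  ultimately show ?thesis by (simp add: x_def)
qed

lemma prox_objective_has_minimizer:
  fixes f :: "'a::euclidean_space \<Rightarrow> ereal"
  assumes proper: "proper_fun f" and "ereal_convex f" and lsc: "lsc_fun f" and a: "0 < a" and b: "0 < b"
  shows "\<exists>p. \<forall>z. ereal a * f (b *\<^sub>R p) + ereal ((norm (p - y))\<^sup>2 / 2)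
                \<le> ereal a * f (b *\<^sub>R z) + ereal ((norm (z - y))\<^sup>2 / 2)"
proof -
  define Q where "Q z = ereal a * f (b *\<^sub>R z) + ereal ((norm (z - y))\<^sup>2 / 2)" for z
  have not_minf: "\<And>x. f x \<noteq> -\<infinity>" using proper by (simp add: proper_fun_def)
  obtain \<alpha> \<beta> where \<beta>: "0 \<le> \<beta>" and Q_ge: "\<And>z. ereal (\<alpha> - \<beta> * norm z + (norm z)\<^sup>2 / 4) \<le> Q z"
    using prox_objective_lower_bound[OF assms(1-5)] unfolding Q_def by blast
  obtain u0 where "f u0 \<noteq> \<infinity>" using proper by (auto simp: proper_fun_def)
  then obtain r0 where "f u0 = ereal r0" using not_minf[of u0] by (cases "f u0") auto
  then obtain q0 where q0: "Q ((1 / b) *\<^sub>R u0) = ereal q0" using b by (simp add: Q_def)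
  define m where "m = (INF z. Q z)"
  have "m \<le> ereal q0" unfolding m_def by (metis q0 INF_lower UNIV_I)
  moreover have "ereal (\<alpha> - \<beta>\<^sup>2) \<le> m"
    unfolding m_def
  proof (rule INF_greatest)
    fix z :: 'a
    have "\<alpha> - \<beta>\<^sup>2 \<le> \<alpha> - \<beta> * norm z + (norm z)\<^sup>2 / 4"
      using zero_le_power2[of "norm z / 2 - \<beta>"] by (simp add: power2_eq_square algebra_simps)
    then show "ereal (\<alpha> - \<beta>\<^sup>2) \<le> Q z" using Q_ge by (meson ereal_less_eq(3) order_trans)
  qed
  ultimately obtain mr where mr: "m = ereal mr" "mr \<le> q0" by (cases m) auto
  have "\<exists>z. Q z < ereal (mr + inverse (real (Suc n)))" for n
  proof -
    have "m < ereal (mr + inverse (real (Suc n)))" using mr(1) by simp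
    then show ?thesis unfolding m_def by (simp add: INF_less_iff)
  qed
  then obtain zs where zs: "\<And>n. Q (zs n) < ereal (mr + inverse (real (Suc n)))" by metis
  have "norm (zs n) \<le> 2 * (1 + \<beta> + \<beta>\<^sup>2 + \<bar>q0 + 1 - \<alpha>\<bar>)" for n
  proof (rule quadratic_growth_bound)
    have "inverse (real (Suc n)) \<le> 1" by (simp add: inverse_le_1_iff)
    then have "mr + inverse (real (Suc n)) \<le> q0 + 1" using mr(2) by linarith
    then have "Q (zs n) < ereal (q0 + 1)" using zs[of n] by (meson ereal_less_eq(3) order_less_le_trans)
    then show "\<alpha> - \<beta> * norm (zs n) + (norm (zs n))\<^sup>2 / 4 \<le> q0 + 1"
      using Q_ge[of "zs n"] by (meson ereal_less_eq(3) order_le_less_trans less_imp_le)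
  qed
  then have "bounded (range zs)" unfolding bounded_iff by blast
  then obtain l r where r: "strict_mono r" and lim: "(zs \<circ> r) \<longlonglongrightarrow> l"
    using bounded_imp_convergent_subsequence by blast
  have "(\<lambda>n. mr + inverse (real (Suc n))) \<longlonglongrightarrow> mr + 0"
    by (intro tendsto_intros LIMSEQ_inverse_real_of_nat)
  from LIMSEQ_subseq_LIMSEQ[OF this r]
  have "Q l \<le> m"
    using prox_objective_lsc[OF lsc not_minf a lim, of _ mr b y] zs less_imp_le mr(1)
    unfolding Q_def o_def by auto
  then show ?thesis unfolding m_def Q_def by (meson INF_lower UNIV_I order_trans)
qed

lemma nonneg_if_nonneg_add_small_multiples:
  fixes A W :: real
  assumes "\<And>t. 0 < t \<Longrightarrow> t \<le> 1 \<Longrightarrow> 0 \<le> A + t * W"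
  shows "0 \<le> A"
proof (rule tendsto_lowerbound)
  have "((\<lambda>t. A + t * W) \<longlongrightarrow> A + 0 * W) (at_right 0)" by (intro tendsto_intros)
  then show "((\<lambda>t. A + t * W) \<longlongrightarrow> A) (at_right 0)" by simp
  show "\<forall>\<^sub>F t in at_right 0. 0 \<le> A + t * W"
    unfolding eventually_at_right_field using assms by (intro exI[of _ 1]) auto
qed simp

lemma prox_minimizer_variational_ineq:
  fixes f :: "'a::real_inner \<Rightarrow> ereal"
  assumes convex: "ereal_convex f" and a: "0 < a" and b: "0 < b"
    and min: "\<And>z. ereal a * f (b *\<^sub>R p) + ereal ((norm (p - y))\<^sup>2 / 2)
                  \<le> ereal a * f (b *\<^sub>R z) + ereal ((norm (z - y))\<^sup>2 / 2)"
    and r: "f (b *\<^sub>R p) = ereal r" and s: "f u = ereal s"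
  shows "r + ((y - p) \<bullet> (u - b *\<^sub>R p)) / (a * b) \<le> s"
proof -
  define w where "w = (1 / b) *\<^sub>R u - p"
  have bw: "b *\<^sub>R w = u - b *\<^sub>R p" using b by (simp add: w_def algebra_simps)
  \<comment> \<open>compare the objective at \<open>p\<close> with its value at \<open>p + t w\<close> and let \<open>t \<rightarrow> 0\<close>\<close>
  have "0 \<le> (a * (s - r) + (p - y) \<bullet> w) + t * ((norm w)\<^sup>2 / 2)" if t: "0 < t" "t \<le> 1" for t
  proof -
    have "b *\<^sub>R (p + t *\<^sub>R w) = b *\<^sub>R p + t *\<^sub>R (b *\<^sub>R w)" by (simp add: algebra_simps)
    also have "\<dots> = (1 - t) *\<^sub>R (b *\<^sub>R p) + t *\<^sub>R u" unfolding bw by (simp add: algebra_simps)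
    finally have f_t: "f (b *\<^sub>R (p + t *\<^sub>R w)) \<le> ereal ((1 - t) * r + t * s)"
      using t ereal_convex_finite[OF convex r s, of t] by simp
    have "ereal (a * r + (norm (p - y))\<^sup>2 / 2)
        \<le> ereal a * f (b *\<^sub>R (p + t *\<^sub>R w)) + ereal ((norm (p + t *\<^sub>R w - y))\<^sup>2 / 2)"
      using min[of "p + t *\<^sub>R w"] r by simp
    also have "\<dots> \<le> ereal a * ereal ((1 - t) * r + t * s) + ereal ((norm (p + t *\<^sub>R w - y))\<^sup>2 / 2)"
      using f_t a by (intro add_right_mono ereal_mult_left_mono) auto
    finally have "a * r + (norm (p - y))\<^sup>2 / 2 \<le> a * ((1 - t) * r + t * s) + (norm (p + t *\<^sub>R w - y))\<^sup>2 / 2"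
      by simp
    moreover have "(norm (p + t *\<^sub>R w - y))\<^sup>2 = (norm (p - y))\<^sup>2 + 2 * t * ((p - y) \<bullet> w) + t\<^sup>2 * (norm w)\<^sup>2"
      unfolding power2_norm_eq_inner
      by (simp add: inner_add_left inner_add_right inner_diff_left inner_diff_right power2_eq_square
          algebra_simps inner_commute)
    ultimately have "0 \<le> t * (a * (s - r) + (p - y) \<bullet> w + t * ((norm w)\<^sup>2 / 2))"
      by (simp add: algebra_simps power2_eq_square)
    then show ?thesis using t by (simp add: zero_le_mult_iff)
  qed
  then have "0 \<le> a * (s - r) + (p - y) \<bullet> w"
    by (rule nonneg_if_nonneg_add_small_multiples)
  then have "b * - ((p - y) \<bullet> w) \<le> b * (a * (s - r))"
    using b by (intro mult_left_mono) auto
  moreover have "(y - p) \<bullet> (u - b *\<^sub>R p) = - b * ((p - y) \<bullet> w)"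
    unfolding bw[symmetric] by (simp add: inner_diff_left algebra_simps)
  ultimately have "(y - p) \<bullet> (u - b *\<^sub>R p) \<le> b * (a * (s - r))" by simp
  then have "(y - p) \<bullet> (u - b *\<^sub>R p) / (a * b) \<le> s - r"
    using a b by (simp add: pos_divide_le_eq mult.commute mult.left_commute)
  then show ?thesis by simp
qed

lemma prox_variational_ineq:
  fixes f :: "'a::euclidean_space \<Rightarrow> ereal"
  assumes proper: "proper_fun f" and convex: "ereal_convex f" and lsc: "lsc_fun f"
    and a: "0 < a" and b: "0 < b"
    and p: "p = prox (\<lambda>z. ereal a * f (b *\<^sub>R z)) y"
  shows "\<exists>r. f (b *\<^sub>R p) = ereal r \<and>
           (\<forall>u s. f u = ereal s \<longrightarrow> r + ((y - p) \<bullet> (u - b *\<^sub>R p)) / (a * b) \<le> s)"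
proof -
  have min: "ereal a * f (b *\<^sub>R p) + ereal ((norm (p - y))\<^sup>2 / 2)
      \<le> ereal a * f (b *\<^sub>R z) + ereal ((norm (z - y))\<^sup>2 / 2)" for z
    using someI_ex[OF prox_objective_has_minimizer[OF assms(1-5), of y]] by (simp add: p prox_def)
  have not_minf: "\<And>x. f x \<noteq> -\<infinity>" using proper by (simp add: proper_fun_def)
  obtain u0 where "f u0 \<noteq> \<infinity>" using proper by (auto simp: proper_fun_def)
  then obtain r0 where u0: "f u0 = ereal r0" using not_minf[of u0] by (cases "f u0") auto
  have "f (b *\<^sub>R p) \<noteq> \<infinity>"
    using min[of "(1 / b) *\<^sub>R u0"] u0 a b by auto
  then obtain r where r: "f (b *\<^sub>R p) = ereal r" using not_minf by (cases "f (b *\<^sub>R p)") auto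
  with prox_minimizer_variational_ineq[OF convex a b min] show ?thesis by blast
qed

lemma prox_pair_monotone:
  fixes f :: "'a::euclidean_space \<Rightarrow> ereal"
  assumes f: "proper_fun f" "ereal_convex f" "lsc_fun f"
    and \<theta>: "0 < \<theta>" "\<theta>' * \<theta> = 1"
    and P: "P = prox (\<lambda>z. ereal \<theta> * f z) y"
    and Q: "Q = prox (\<lambda>z. ereal \<theta>' * f (\<theta> *\<^sub>R z)) w"
  shows "0 \<le> (\<theta>' *\<^sub>R (y - P) - (w - Q)) \<bullet> (P - \<theta> *\<^sub>R Q)"
proof -
  have \<theta>': "0 < \<theta>'" using \<theta> zero_less_mult_iff[of \<theta>' \<theta>] by auto
  from prox_variational_ineq[OF f \<theta>(1) zero_less_one, of P y] P
  obtain r where r: "f P = ereal r"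
    and vi_P: "\<And>u s. f u = ereal s \<Longrightarrow> r + ((y - P) \<bullet> (u - P)) / \<theta> \<le> s"
    by auto
  from prox_variational_ineq[OF f \<theta>' \<theta>(1) Q]
  obtain s where s: "f (\<theta> *\<^sub>R Q) = ereal s"
    and vi_Q: "\<And>u s'. f u = ereal s' \<Longrightarrow> s + (w - Q) \<bullet> (u - \<theta> *\<^sub>R Q) \<le> s'"
    using \<theta>(2) by auto
  have "r + ((y - P) \<bullet> (\<theta> *\<^sub>R Q - P)) / \<theta> \<le> s" by (rule vi_P[OF s])
  moreover have "s + (w - Q) \<bullet> (P - \<theta> *\<^sub>R Q) \<le> r" by (rule vi_Q[OF r])
  moreover have "((y - P) \<bullet> (\<theta> *\<^sub>R Q - P)) / \<theta> = - ((\<theta>' *\<^sub>R (y - P)) \<bullet> (P - \<theta> *\<^sub>R Q))"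
  proof -
    have "\<theta>' = 1 / \<theta>" using \<theta> by (simp add: eq_divide_eq)
    then have "((y - P) \<bullet> (\<theta> *\<^sub>R Q - P)) / \<theta> = \<theta>' * ((y - P) \<bullet> (\<theta> *\<^sub>R Q - P))" by simp
    also have "\<dots> = - ((\<theta>' *\<^sub>R (y - P)) \<bullet> (P - \<theta> *\<^sub>R Q))" by (simp add: inner_diff_right algebra_simps)
    finally show ?thesis .
  qed
  ultimately show ?thesis by (simp add: inner_diff_left)
qed

lemma mat_one_minus_mult_transpose:
  fixes B :: "real^'d^'m"
  shows "(mat 1 - lam *\<^sub>R (B ** transpose B)) *v z = z - lam *\<^sub>R (B *v (transpose B *v z))"
  by (simp add: matrix_vector_mult_diff_rdistrib matrix_vector_mul_assoc scaleR_matrix_vector_assoc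
      del: transpose_matrix_vector)

lemma primal_dual_energy_estimate:
  fixes T :: "'b::real_inner \<Rightarrow> 'a::real_inner"
  assumes T: "linear T" and lam: "0 < lam" and \<gamma>: "0 < \<gamma>"
    and lam_T: "lam * (norm (T (D - V)))\<^sup>2 \<le> (norm (D - V))\<^sup>2"
    and cross: "0 \<le> T D \<bullet> X + \<gamma> / lam * (D \<bullet> V - D \<bullet> D) - \<gamma> * (T D \<bullet> T V)"
  shows "(norm (X - \<gamma> *\<^sub>R T D))\<^sup>2 + \<gamma>\<^sup>2 / lam * (norm D)\<^sup>2
         \<le> (norm X)\<^sup>2 + \<gamma>\<^sup>2 / lam * ((norm V)\<^sup>2 - lam * (norm (T V))\<^sup>2)"
proof -
  define g where "g = \<gamma>\<^sup>2 / lam"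
  have g: "g * lam = \<gamma>\<^sup>2" "\<gamma> * (\<gamma> / lam) = g"
    using lam by (simp_all add: g_def power2_eq_square)
  have "lam * (T D \<bullet> T D - 2 * (T D \<bullet> T V) + T V \<bullet> T V) \<le> D \<bullet> D - 2 * (D \<bullet> V) + V \<bullet> V"
    using lam_T unfolding linear_diff[OF T] power2_norm_eq_inner
    by (simp add: inner_diff_left inner_diff_right inner_commute algebra_simps)
  \<comment> \<open>the claim is \<open>2 \<gamma>\<close> times \<open>cross\<close> plus \<open>g = \<gamma>\<^sup>2 / lam\<close> times this inequality\<close>
  then have "g * (lam * (T D \<bullet> T D - 2 * (T D \<bullet> T V) + T V \<bullet> T V)) \<le> g * (D \<bullet> D - 2 * (D \<bullet> V) + V \<bullet> V)"
    using lam by (intro mult_left_mono) (simp_all add: g_def)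
  then have "\<gamma>\<^sup>2 * (T D \<bullet> T D - 2 * (T D \<bullet> T V) + T V \<bullet> T V) \<le> g * (D \<bullet> D - 2 * (D \<bullet> V) + V \<bullet> V)"
    by (simp only: mult.assoc[symmetric] g(1))
  then have psd: "\<gamma>\<^sup>2 * (T D \<bullet> T D) - 2 * \<gamma>\<^sup>2 * (T D \<bullet> T V) + \<gamma>\<^sup>2 * (T V \<bullet> T V)
      \<le> g * (D \<bullet> D) - 2 * g * (D \<bullet> V) + g * (V \<bullet> V)"
    by (simp add: algebra_simps)
  have "0 \<le> 2 * \<gamma> * (T D \<bullet> X + \<gamma> / lam * (D \<bullet> V - D \<bullet> D) - \<gamma> * (T D \<bullet> T V))"
    using cross \<gamma> by simp
  also have "\<dots> = 2 * \<gamma> * (T D \<bullet> X) + 2 * g * (D \<bullet> V) - 2 * g * (D \<bullet> D) - 2 * \<gamma>\<^sup>2 * (T D \<bullet> T V)"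
    by (simp add: g(2)[symmetric] power2_eq_square algebra_simps)
  finally have cross': "0 \<le> \<dots>" .
  have lhs: "(norm (X - \<gamma> *\<^sub>R T D))\<^sup>2 = X \<bullet> X - 2 * \<gamma> * (T D \<bullet> X) + \<gamma>\<^sup>2 * (T D \<bullet> T D)"
    unfolding power2_norm_eq_inner
    by (simp add: inner_diff_left inner_diff_right inner_commute power2_eq_square algebra_simps)
  have rhs: "g * ((norm V)\<^sup>2 - lam * (norm (T V))\<^sup>2) = g * (V \<bullet> V) - \<gamma>\<^sup>2 * (T V \<bullet> T V)"
    by (simp add: power2_norm_eq_inner right_diff_distrib mult.assoc[symmetric] g(1))
  show ?thesis
    using lhs cross' psd rhs unfolding g_def[symmetric] by (simp add: power2_norm_eq_inner)
qed

lemma primal_dual_step_estimate: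
  fixes f :: "real^'m \<Rightarrow> ereal" and B :: "real^'d^'m"
  assumes f: "proper_fun f" "ereal_convex f" "lsc_fun f"
    and lam: "0 < lam" and \<gamma>: "0 < \<gamma>"
    and lam_BT: "\<And>z. lam * (norm (transpose B *v z))\<^sup>2 \<le> (norm z)\<^sup>2"
    and y: "y = B *v xh + (mat 1 - lam *\<^sub>R (B ** transpose B)) *v ((\<gamma> / lam) *\<^sub>R v)"
    and v': "v' = (lam / \<gamma>) *\<^sub>R (y - prox (\<lambda>z. ereal (\<gamma> / lam) * f z) y)"
    and x': "x' = xh - \<gamma> *\<^sub>R (transpose B *v v')"
    and w: "w = (lam / \<gamma>) *\<^sub>R (B *v xhs) + (mat 1 - lam *\<^sub>R (B ** transpose B)) *v vs"
    and vs: "vs = w - prox (\<lambda>z. ereal (lam / \<gamma>) * f ((\<gamma> / lam) *\<^sub>R z)) w"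
    and xs: "xs = xhs - \<gamma> *\<^sub>R (transpose B *v vs)"
  shows "(norm (x' - xs))\<^sup>2 + \<gamma>\<^sup>2 / lam * (norm (v' - vs))\<^sup>2
         \<le> (norm (xh - xhs))\<^sup>2 + \<gamma>\<^sup>2 / lam * ((norm (v - vs))\<^sup>2 - lam * (norm (transpose B *v (v - vs)))\<^sup>2)"
proof -
  define \<theta> where "\<theta> = \<gamma> / lam"
  define P where "P = prox (\<lambda>z. ereal \<theta> * f z) y"
  define Q where "Q = prox (\<lambda>z. ereal (lam / \<gamma>) * f (\<theta> *\<^sub>R z)) w"
  define T where "T z = transpose B *v z" for z
  define D where "D = v' - vs"
  define V where "V = v - vs"
  define X where "X = xh - xhs"
  have \<theta>: "0 < \<theta>" "lam / \<gamma> * \<theta> = 1" using lam \<gamma> by (auto simp: \<theta>_def)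
  have T: "linear T" unfolding T_def by (rule matrix_vector_mul_linear)
  have B_adj: "a \<bullet> (B *v b) = T a \<bullet> b" for a b
    by (simp add: T_def dot_lmul_matrix[symmetric])
  have v'_P: "v' = (lam / \<gamma>) *\<^sub>R (y - P)" by (simp add: v' P_def \<theta>_def)
  have vs_Q: "vs = w - Q" by (simp add: vs Q_def \<theta>_def)
  \<comment> \<open>\<open>v'\<close> and \<open>vs\<close> are subgradients of \<open>f\<close> at \<open>P\<close> and \<open>\<theta> Q\<close>, and \<open>P - \<theta> Q\<close> is computed from the iteration\<close>
  have "0 \<le> D \<bullet> (P - \<theta> *\<^sub>R Q)"
    using prox_pair_monotone[OF f \<theta> P_def Q_def] by (simp add: D_def v'_P vs_Q)
  moreover have "P - \<theta> *\<^sub>R Q = B *v X + \<theta> *\<^sub>R (V - D) - \<gamma> *\<^sub>R (B *v T V)"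
  proof -
    have "\<theta> *\<^sub>R Q = \<theta> *\<^sub>R (w - vs)" by (simp add: vs_Q)
    also have "\<dots> = \<theta> *\<^sub>R ((lam / \<gamma>) *\<^sub>R (B *v xhs) - lam *\<^sub>R (B *v T vs))"
      unfolding w mat_one_minus_mult_transpose T_def by simp
    also have "\<dots> = B *v xhs - \<gamma> *\<^sub>R (B *v T vs)"
      using lam \<gamma> by (simp add: \<theta>_def scaleR_diff_right)
    finally have \<theta>Q: "\<theta> *\<^sub>R Q = B *v xhs - \<gamma> *\<^sub>R (B *v T vs)" .
    have "P = y - \<theta> *\<^sub>R v'" using lam \<gamma> by (simp add: v'_P \<theta>_def)
    also have "\<dots> = B *v xh + \<theta> *\<^sub>R v - \<gamma> *\<^sub>R (B *v T v) - \<theta> *\<^sub>R v'"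
      using lam unfolding y mat_one_minus_mult_transpose T_def
      by (simp add: \<theta>_def matrix_vector_mult_scaleR del: transpose_matrix_vector)
    finally show ?thesis
      unfolding \<theta>Q X_def V_def D_def linear_diff[OF T]
      by (simp add: algebra_simps matrix_vector_mult_diff_distrib)
  qed
  ultimately have "0 \<le> T D \<bullet> X + \<theta> * (D \<bullet> V - D \<bullet> D) - \<gamma> * (T D \<bullet> T V)"
    by (simp add: inner_diff_right inner_add_right B_adj)
  from primal_dual_energy_estimate[OF T lam \<gamma> lam_BT[of "D - V", folded T_def] this[unfolded \<theta>_def]]
  have "(norm (X - \<gamma> *\<^sub>R T D))\<^sup>2 + \<gamma>\<^sup>2 / lam * (norm D)\<^sup>2
      \<le> (norm X)\<^sup>2 + \<gamma>\<^sup>2 / lam * ((norm V)\<^sup>2 - lam * (norm (T V))\<^sup>2)" .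
  moreover have "x' - xs = X - \<gamma> *\<^sub>R T D"
    unfolding x' xs X_def D_def T_def
    by (simp add: algebra_simps matrix_vector_mult_diff_distrib del: transpose_matrix_vector)
  ultimately show ?thesis by (simp add: D_def V_def X_def T_def)
qed

section \<open>Mini-batches, step sizes and expectations over the index sequence\<close>

lemma sum_norm_diff_scaleR_square:
  fixes u :: "'a::real_inner"
  assumes "(\<Sum>i\<in>I. e i) = 0"
  shows "(\<Sum>i\<in>I. (norm (u - \<gamma> *\<^sub>R e i))\<^sup>2) = real (card I) * (norm u)\<^sup>2 + \<gamma>\<^sup>2 * (\<Sum>i\<in>I. (norm (e i))\<^sup>2)"
proof -
  have "(\<Sum>i\<in>I. (norm (u - \<gamma> *\<^sub>R e i))\<^sup>2) = (\<Sum>i\<in>I. (norm u)\<^sup>2 - 2 * \<gamma> * (u \<bullet> e i) + \<gamma>\<^sup>2 * (norm (e i))\<^sup>2)"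
    unfolding power2_norm_eq_inner
    by (intro sum.cong refl) (simp add: inner_diff_left inner_diff_right inner_commute algebra_simps power2_eq_square)
  also have "\<dots> = real (card I) * (norm u)\<^sup>2 - 2 * \<gamma> * (u \<bullet> (\<Sum>i\<in>I. e i)) + \<gamma>\<^sup>2 * (\<Sum>i\<in>I. (norm (e i))\<^sup>2)"
    by (simp add: sum.distrib sum_subtractf inner_sum_right sum_distrib_left)
  finally show ?thesis using assms by simp
qed

lemma sum_consecutive_blocks:
  fixes h :: "nat \<Rightarrow> 'a::comm_monoid_add"
  shows "(\<Sum>i=1..N. \<Sum>j=(i-1)*p+1..i*p. h j) = (\<Sum>j=1..N*p. h j)"
proof (induction N)
  case (Suc N)
  have "(\<Sum>j=1..N*p + p. h j) = (\<Sum>j=1..N*p. h j) + (\<Sum>j=N*p+1..N*p + p. h j)"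
    by (rule sum.ub_add_nat) simp
  then show ?case using Suc by (simp add: add.commute)
qed simp

lemma sum_batch_grad:
  assumes "p dvd n"
  shows "(\<Sum>i=1..n div p. batch_grad p g i x) = (1 / real p) *\<^sub>R (\<Sum>j=1..n. g j x)"
  using sum_consecutive_blocks[where h="\<lambda>j. g j x" and N="n div p" and p=p]
  by (simp add: assms batch_grad_def scaleR_sum_right[symmetric])

lemma stepsize_pos: "0 < c \<Longrightarrow> 1 \<le> k \<Longrightarrow> 0 < stepsize c \<alpha> k"
  unfolding stepsize_def by simp

lemma stepsize_antimono:
  assumes "0 < c" "0 \<le> \<alpha>" "1 \<le> k" "k \<le> k'"
  shows "stepsize c \<alpha> k' \<le> stepsize c \<alpha> k"
  unfolding stepsize_def using assms by (intro divide_left_mono powr_mono2 mult_pos_pos) auto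

lemma alg_cong:
  assumes "\<And>j. j < k \<Longrightarrow> \<omega> j = \<omega>' j"
  shows "alg f1 B p g c \<alpha> lam x1 v1 \<omega> k = alg f1 B p g c \<alpha> lam x1 v1 \<omega>' k"
  using assms by (induction k) simp_all

lemma alg_Suc_fun_upd:
  assumes "1 \<le> k"
  shows "alg f1 B p g c \<alpha> lam x1 v1 (fun_upd \<omega> k i) (Suc k)
       = alg_step f1 B p g c \<alpha> lam k i (alg f1 B p g c \<alpha> lam x1 v1 \<omega> k)"
proof -
  have "alg f1 B p g c \<alpha> lam x1 v1 (fun_upd \<omega> k i) k = alg f1 B p g c \<alpha> lam x1 v1 \<omega> k"
    by (rule alg_cong) simp
  with assms show ?thesis by simp
qed

lemma expectation_pair_pmf_finite:
  fixes H :: "'a \<times> 'b \<Rightarrow> real"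
  assumes "finite (set_pmf A)" "finite (set_pmf B)"
  shows "measure_pmf.expectation (pair_pmf A B) H
         = measure_pmf.expectation B (\<lambda>b. measure_pmf.expectation A (\<lambda>a. H (a, b)))"
proof -
  have "measure_pmf.expectation (pair_pmf A B) H = (\<Sum>x\<in>set_pmf A \<times> set_pmf B. H x * pmf (pair_pmf A B) x)"
    by (rule integral_measure_pmf_real) (use assms in auto)
  also have "\<dots> = (\<Sum>b\<in>set_pmf B. (\<Sum>a\<in>set_pmf A. H (a, b) * pmf A a) * pmf B b)"
    by (subst sum.cartesian_product', subst sum.swap) (simp add: pmf_pair sum_distrib_right mult.assoc)
  also have "\<dots> = measure_pmf.expectation B (\<lambda>b. measure_pmf.expectation A (\<lambda>a. H (a, b)))"
    using assms by (subst (1 2) integral_measure_pmf_real) auto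
  finally show ?thesis .
qed

lemma finite_set_pmf_indices:
  fixes N k :: nat
  assumes "0 < N"
  shows "finite (set_pmf (Pi_pmf {1..<k} 1 (\<lambda>_. pmf_of_set {1..N})))"
proof -
  have "set_pmf (pmf_of_set {1..N}) = {1..N}" using assms by (intro set_pmf_of_set) auto
  then show ?thesis by (subst set_Pi_pmf) (auto intro!: finite_PiE_dflt)
qed

lemma Ek_mono:
  assumes "0 < n div p" "\<And>\<omega>. F \<omega> \<le> G \<omega>"
  shows "Ek n p k F \<le> Ek n p k G"
  unfolding Ek_def using assms
  by (intro integral_mono integrable_measure_pmf_finite finite_set_pmf_indices) auto

lemma Ek_add:
  assumes "0 < n div p"
  shows "Ek n p k (\<lambda>\<omega>. F \<omega> + G \<omega>) = Ek n p k F + Ek n p k G"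
  unfolding Ek_def using assms
  by (intro Bochner_Integration.integral_add integrable_measure_pmf_finite finite_set_pmf_indices) auto

lemma Ek_cmult: "Ek n p k (\<lambda>\<omega>. c * F \<omega>) = c * Ek n p k F"
  unfolding Ek_def by simp

lemma Ek_const: "Ek n p k (\<lambda>\<omega>. c) = c"
  unfolding Ek_def by simp

lemma Ek_Suc:
  assumes N: "0 < n div p" and k: "1 \<le> k"
  shows "Ek n p (Suc k) F = Ek n p k (\<lambda>\<omega>. (\<Sum>i=1..n div p. F (fun_upd \<omega> k i)) / real (n div p))"
proof -
  define U where "U = pmf_of_set {1..n div p}"
  have U: "set_pmf U = {1..n div p}" unfolding U_def using N by (intro set_pmf_of_set) auto
  have "{1..<Suc k} = insert k {1..<k}" using k by auto
  then have "Pi_pmf {1..<Suc k} 1 (\<lambda>_. U) = map_pmf (\<lambda>(y, f). f(k := y)) (pair_pmf U (Pi_pmf {1..<k} 1 (\<lambda>_. U)))"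
    by (simp add: Pi_pmf_insert)
  then have "Ek n p (Suc k) F
      = measure_pmf.expectation (pair_pmf U (Pi_pmf {1..<k} 1 (\<lambda>_. U))) (\<lambda>(y, f). F (f(k := y)))"
    by (simp add: Ek_def U_def case_prod_unfold)
  also have "\<dots> = Ek n p k (\<lambda>\<omega>. measure_pmf.expectation U (\<lambda>i. F (fun_upd \<omega> k i)))"
    using U finite_set_pmf_indices[OF N, of k]
    by (subst expectation_pair_pmf_finite) (simp_all add: Ek_def U_def)
  also have "\<dots> = Ek n p k (\<lambda>\<omega>. (\<Sum>i=1..n div p. F (fun_upd \<omega> k i)) / real (n div p))"
    using N by (simp add: U_def integral_pmf_of_set)
  finally show ?thesis .
qed

lemma stepsize_condition:
  fixes \<nu> \<beta> C \<gamma> :: real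
  assumes "0 < \<nu>" "0 < \<beta>" "0 \<le> C" "0 < \<gamma>" "\<gamma> \<le> \<beta> * \<nu> / (2 * (\<nu> + 2 * C * \<beta>))"
  shows "\<gamma> \<le> \<beta>" and "1 - 2 * \<nu> * \<gamma> * (1 - \<gamma> / \<beta>) + 2 * C * \<gamma>\<^sup>2 \<le> 1 - \<nu> * \<gamma>"
proof -
  have "0 < \<nu> + 2 * C * \<beta>" using assms by (simp add: add_pos_nonneg)
  then have \<gamma>: "2 * \<gamma> * \<nu> + 4 * C * \<beta> * \<gamma> \<le> \<beta> * \<nu>"
    using assms(5) by (simp add: pos_le_divide_eq algebra_simps)
  moreover have "0 \<le> C * \<beta> * \<gamma>" using assms by simp
  ultimately have "2 * \<gamma> * \<nu> \<le> \<beta> * \<nu>" and \<gamma>': "2 * \<gamma> * \<nu> + 2 * C * \<beta> * \<gamma> \<le> \<beta> * \<nu>"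
    by linarith+
  then have "2 * \<gamma> \<le> \<beta>" using assms(1) by simp
  then show "\<gamma> \<le> \<beta>" using assms(4) by linarith
  have "\<gamma> * (2 * \<gamma> * \<nu> + 2 * C * \<beta> * \<gamma>) \<le> \<gamma> * (\<beta> * \<nu>)"
    using \<gamma>' assms(4) by (intro mult_left_mono) auto
  then have "2 * \<nu> * \<gamma>\<^sup>2 / \<beta> + 2 * C * \<gamma>\<^sup>2 \<le> \<nu> * \<gamma>"
    using assms(2) by (simp add: field_simps power2_eq_square)
  then show "1 - 2 * \<nu> * \<gamma> * (1 - \<gamma> / \<beta>) + 2 * C * \<gamma>\<^sup>2 \<le> 1 - \<nu> * \<gamma>"
    by (simp add: power2_eq_square algebra_simps)
qed

section \<open>The Lyapunov recursion\<close>

locale stochastic_primal_dual =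
  fixes f1 :: "real^'m \<Rightarrow> ereal" and B :: "real^'d^'m" and n p :: nat
    and \<phi> :: "nat \<Rightarrow> real^'d \<Rightarrow> real" and g\<phi> :: "nat \<Rightarrow> real^'d \<Rightarrow> real^'d"
    and f2 :: "real^'d \<Rightarrow> real" and gf2 :: "real^'d \<Rightarrow> real^'d"
    and \<nu> \<beta> lam c \<alpha> :: real and xs :: "real^'d" and vs :: "real^'m"
  assumes f1: "proper_fun f1" "ereal_convex f1" "lsc_fun f1"
    and np: "0 < n" "0 < p" "p dvd n"
    and \<phi>_grad: "\<And>j x. j \<in> {1..n} \<Longrightarrow> (\<phi> j has_derivative (\<lambda>h. g\<phi> j x \<bullet> h)) (at x)"
    and f2_eq: "\<And>x. f2 x = (1 / real n) * (\<Sum>j=1..n. \<phi> j x)"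
    and gf2_eq: "\<And>x. gf2 x = (1 / real n) *\<^sub>R (\<Sum>j=1..n. g\<phi> j x)"
    and \<nu>: "0 < \<nu>" "strongly_convex \<nu> f2"
    and \<beta>: "0 < \<beta>" "(1 / \<beta>)-lipschitz_on UNIV gf2"
    and vs_fix: "\<And>k. k \<ge> 1 \<Longrightarrow>
       vs = (let \<gamma> = stepsize c \<alpha> k;
                 w = (lam / \<gamma>) *\<^sub>R (B *v (xs - \<gamma> *\<^sub>R gf2 xs)) + (mat 1 - lam *\<^sub>R (B ** transpose B)) *v vs
             in w - prox (\<lambda>z. ereal (lam / \<gamma>) * f1 ((\<gamma> / lam) *\<^sub>R z)) w)"
    and xs_fix: "\<And>k. k \<ge> 1 \<Longrightarrow>
       xs = xs - stepsize c \<alpha> k *\<^sub>R gf2 xs - stepsize c \<alpha> k *\<^sub>R (transpose B *v vs)"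
    and params: "0 < c" "0 < \<alpha>" "0 < lam" "lam < 1 / rho_max (B ** transpose B)"
begin

abbreviation \<gamma> :: "nat \<Rightarrow> real" where "\<gamma> k \<equiv> stepsize c \<alpha> k"

abbreviation N :: nat where "N \<equiv> n div p"

abbreviation iter :: "real^'d \<Rightarrow> real^'m \<Rightarrow> (nat \<Rightarrow> nat) \<Rightarrow> nat \<Rightarrow> (real^'d) \<times> (real^'m)" where
  "iter x1 v1 \<equiv> alg f1 B p g\<phi> c \<alpha> lam x1 v1"

abbreviation \<kappa> :: real where "\<kappa> \<equiv> 1 - lam * rho_min (B ** transpose B)"

definition lyapunov :: "nat \<Rightarrow> (real^'d) \<times> (real^'m) \<Rightarrow> real" where
  "lyapunov k xv = (norm (fst xv - xs))\<^sup>2 + (\<gamma> k)\<^sup>2 / lam * (norm (snd xv - vs))\<^sup>2"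

lemma N_pos: "0 < N"
  using np by (auto elim!: dvdE)

lemma f2_has_derivative: "(f2 has_derivative (\<lambda>h. gf2 x \<bullet> h)) (at x)"
proof -
  have "((\<lambda>x. (1 / real n) * (\<Sum>j=1..n. \<phi> j x)) has_derivative
        (\<lambda>h. (1 / real n) * (\<Sum>j=1..n. g\<phi> j x \<bullet> h))) (at x)"
    by (intro derivative_intros \<phi>_grad) auto
  then show ?thesis
    by (simp add: f2_eq[abs_def] gf2_eq inner_sum_left)
qed

lemma batch_grad_centered: "(\<Sum>i=1..N. batch_grad p g\<phi> i x - gf2 x) = 0"
proof -
  have "1 / real p = real N * (1 / real n)" using np by (auto elim!: dvdE)
  then have "(\<Sum>i=1..N. batch_grad p g\<phi> i x) = real N *\<^sub>R gf2 x"
    unfolding sum_batch_grad[OF np(3)] by (simp add: gf2_eq)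
  then show ?thesis by (simp add: sum_subtractf sum_constant_scaleR del: sum_constant)
qed

lemma lam_norm_transpose_le: "lam * (norm (transpose B *v z))\<^sup>2 \<le> (norm z)\<^sup>2"
proof -
  define \<rho> where "\<rho> = rho_max (B ** transpose B)"
  have "0 < 1 / \<rho>" using params(3,4) unfolding \<rho>_def by linarith
  then have "0 < \<rho>" by (simp add: zero_less_divide_1_iff)
  then have "lam * \<rho> < 1" using params(4) by (simp add: \<rho>_def pos_less_divide_eq)
  then have "(lam * \<rho>) * (norm z)\<^sup>2 \<le> 1 * (norm z)\<^sup>2"
    by (intro mult_right_mono) auto
  then have "lam * (\<rho> * (norm z)\<^sup>2) \<le> (norm z)\<^sup>2" by simp
  moreover have "lam * (norm (transpose B *v z))\<^sup>2 \<le> lam * (\<rho> * (norm z)\<^sup>2)"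
    using norm_transpose_mult_bounds(1) params(3) by (simp add: \<rho>_def)
  ultimately show ?thesis by linarith
qed

lemma norm_sub_lam_transpose_le: "(norm z)\<^sup>2 - lam * (norm (transpose B *v z))\<^sup>2 \<le> \<kappa> * (norm z)\<^sup>2"
  using mult_left_mono[OF norm_transpose_mult_bounds(2)[of B z], of lam] params(3)
  by (simp add: algebra_simps)

lemma alg_step_estimate:
  assumes k: "1 \<le> k"
  shows "lyapunov k (alg_step f1 B p g\<phi> c \<alpha> lam k i (x, v))
    \<le> (norm ((x - xs) - \<gamma> k *\<^sub>R (batch_grad p g\<phi> i x - gf2 xs)))\<^sup>2 + (\<gamma> k)\<^sup>2 / lam * \<kappa> * (norm (v - vs))\<^sup>2"
proof -
  define xh where "xh = x - \<gamma> k *\<^sub>R batch_grad p g\<phi> i x"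
  define xhs where "xhs = xs - \<gamma> k *\<^sub>R gf2 xs"
  define y where "y = B *v xh + (mat 1 - lam *\<^sub>R (B ** transpose B)) *v ((\<gamma> k / lam) *\<^sub>R v)"
  define v' where "v' = (lam / \<gamma> k) *\<^sub>R (y - prox (\<lambda>z. ereal (\<gamma> k / lam) * f1 z) y)"
  define x' where "x' = xh - \<gamma> k *\<^sub>R (transpose B *v v')"
  define w where "w = (lam / \<gamma> k) *\<^sub>R (B *v xhs) + (mat 1 - lam *\<^sub>R (B ** transpose B)) *v vs"
  have step: "alg_step f1 B p g\<phi> c \<alpha> lam k i (x, v) = (x', v')"
    by (simp add: alg_step_def Let_def x'_def v'_def y_def xh_def)
  have "vs = w - prox (\<lambda>z. ereal (lam / \<gamma> k) * f1 ((\<gamma> k / lam) *\<^sub>R z)) w"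
    using vs_fix[OF k] by (simp add: Let_def w_def xhs_def)
  moreover have "xs = xhs - \<gamma> k *\<^sub>R (transpose B *v vs)"
    using xs_fix[OF k] by (simp add: xhs_def)
  ultimately have "(norm (x' - xs))\<^sup>2 + (\<gamma> k)\<^sup>2 / lam * (norm (v' - vs))\<^sup>2
      \<le> (norm (xh - xhs))\<^sup>2 + (\<gamma> k)\<^sup>2 / lam * ((norm (v - vs))\<^sup>2 - lam * (norm (transpose B *v (v - vs)))\<^sup>2)"
    using params(1,3) k
    by (intro primal_dual_step_estimate[OF f1 _ _ lam_norm_transpose_le y_def v'_def x'_def w_def])
      (simp_all add: stepsize_pos)
  also have "\<dots> \<le> (norm (xh - xhs))\<^sup>2 + (\<gamma> k)\<^sup>2 / lam * (\<kappa> * (norm (v - vs))\<^sup>2)"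
    using params(3) by (intro add_left_mono mult_left_mono norm_sub_lam_transpose_le) auto
  also have "xh - xhs = (x - xs) - \<gamma> k *\<^sub>R (batch_grad p g\<phi> i x - gf2 xs)"
    by (simp add: xh_def xhs_def algebra_simps)
  finally show ?thesis by (simp add: step lyapunov_def)
qed

lemma averaged_alg_step_estimate:
  assumes k: "1 \<le> k" and \<gamma>_le: "\<gamma> k \<le> \<beta>"
  shows "(\<Sum>i=1..N. lyapunov k (alg_step f1 B p g\<phi> c \<alpha> lam k i (x, v))) / real N
    \<le> (1 - 2 * \<nu> * \<gamma> k * (1 - \<gamma> k / \<beta>)) * (norm (x - xs))\<^sup>2
       + (\<gamma> k)\<^sup>2 * ((\<Sum>i=1..N. (norm (batch_grad p g\<phi> i x - gf2 x))\<^sup>2) / real N)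
       + (\<gamma> k)\<^sup>2 / lam * \<kappa> * (norm (v - vs))\<^sup>2"
proof -
  define u where "u = (x - xs) - \<gamma> k *\<^sub>R (gf2 x - gf2 xs)"
  define e where "e i = batch_grad p g\<phi> i x - gf2 x" for i
  define r where "r = (\<gamma> k)\<^sup>2 / lam * \<kappa> * (norm (v - vs))\<^sup>2"
  \<comment> \<open>the mini-batch gradients are unbiased, so the cross terms average out\<close>
  have "(\<Sum>i=1..N. lyapunov k (alg_step f1 B p g\<phi> c \<alpha> lam k i (x, v))) \<le> (\<Sum>i=1..N. (norm (u - \<gamma> k *\<^sub>R e i))\<^sup>2 + r)"
    using alg_step_estimate[OF k] by (intro sum_mono) (simp add: u_def e_def r_def algebra_simps)
  also have "\<dots> = real N * (norm u)\<^sup>2 + (\<gamma> k)\<^sup>2 * (\<Sum>i=1..N. (norm (e i))\<^sup>2) + real N * r"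
    using sum_norm_diff_scaleR_square[of e "{1..N}" u "\<gamma> k"] batch_grad_centered
    by (simp add: sum.distrib e_def)
  finally have "(\<Sum>i=1..N. lyapunov k (alg_step f1 B p g\<phi> c \<alpha> lam k i (x, v))) / real N
      \<le> (norm u)\<^sup>2 + (\<gamma> k)\<^sup>2 * ((\<Sum>i=1..N. (norm (e i))\<^sup>2) / real N) + r"
    using N_pos by (simp add: divide_simps) (simp add: algebra_simps)
  moreover have "(norm u)\<^sup>2 \<le> (1 - 2 * \<nu> * \<gamma> k * (1 - \<gamma> k / \<beta>)) * (norm (x - xs))\<^sup>2"
    unfolding u_def using \<nu>(1) \<beta>(1) \<gamma>_le params(1) k stepsize_pos[of c k \<alpha>]
    by (intro gradient_step_contraction[OF f2_has_derivative \<nu>(2) _ \<beta>(2)]) auto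
  ultimately show ?thesis by (simp add: e_def r_def)
qed

lemma expected_lyapunov_step:
  fixes x1 :: "real^'d" and v1 :: "real^'m"
  assumes k: "1 \<le> k" and \<gamma>_le: "\<gamma> k \<le> \<beta>"
  shows "Ek n p (Suc k) (\<lambda>\<omega>. lyapunov k (iter x1 v1 \<omega> (Suc k)))
    \<le> (1 - 2 * \<nu> * \<gamma> k * (1 - \<gamma> k / \<beta>)) * Ek n p k (\<lambda>\<omega>. (norm (fst (iter x1 v1 \<omega> k) - xs))\<^sup>2)
       + (\<gamma> k)\<^sup>2 * Ek n p (Suc k) (\<lambda>\<omega>. (norm (batch_grad p g\<phi> (\<omega> k) (fst (iter x1 v1 \<omega> k)) - gf2 (fst (iter x1 v1 \<omega> k))))\<^sup>2)
       + (\<gamma> k)\<^sup>2 / lam * \<kappa> * Ek n p k (\<lambda>\<omega>. (norm (snd (iter x1 v1 \<omega> k) - vs))\<^sup>2)"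
    (is "_ \<le> ?A * Ek n p k ?D + ?G * Ek n p (Suc k) ?E + ?R * Ek n p k ?V")
proof -
  have iter_upd: "iter x1 v1 (fun_upd \<omega> k i) k = iter x1 v1 \<omega> k" for \<omega> i
    by (rule alg_cong) simp
  define avg_E where "avg_E \<omega> = (\<Sum>i=1..N. (norm (batch_grad p g\<phi> i (fst (iter x1 v1 \<omega> k)) - gf2 (fst (iter x1 v1 \<omega> k))))\<^sup>2) / real N"
    for \<omega>
  have "Ek n p (Suc k) (\<lambda>\<omega>. lyapunov k (iter x1 v1 \<omega> (Suc k)))
      = Ek n p k (\<lambda>\<omega>. (\<Sum>i=1..N. lyapunov k (iter x1 v1 (fun_upd \<omega> k i) (Suc k))) / real N)"
    by (rule Ek_Suc[OF N_pos k])
  also have "\<dots> = Ek n p k (\<lambda>\<omega>. (\<Sum>i=1..N. lyapunov k (alg_step f1 B p g\<phi> c \<alpha> lam k i (iter x1 v1 \<omega> k))) / real N)"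
    by (simp only: alg_Suc_fun_upd[OF k])
  also have "\<dots> \<le> Ek n p k (\<lambda>\<omega>. ?A * ?D \<omega> + ?G * avg_E \<omega> + ?R * ?V \<omega>)"
  proof (intro Ek_mono[OF N_pos])
    fix \<omega>
    show "(\<Sum>i=1..N. lyapunov k (alg_step f1 B p g\<phi> c \<alpha> lam k i (iter x1 v1 \<omega> k))) / real N
        \<le> ?A * ?D \<omega> + ?G * avg_E \<omega> + ?R * ?V \<omega>"
      using averaged_alg_step_estimate[OF k \<gamma>_le, of "fst (iter x1 v1 \<omega> k)" "snd (iter x1 v1 \<omega> k)"]
      by (simp add: avg_E_def)
  qed
  also have "\<dots> = ?A * Ek n p k ?D + ?G * Ek n p k avg_E + ?R * Ek n p k ?V"
    by (simp only: Ek_add[OF N_pos] Ek_cmult)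
  also have "Ek n p k avg_E = Ek n p (Suc k) ?E"
    using Ek_Suc[OF N_pos k, of ?E] by (simp add: avg_E_def[abs_def] iter_upd)
  finally show ?thesis .
qed

lemma lyapunov_Suc_le: "1 \<le> k \<Longrightarrow> lyapunov (Suc k) xv \<le> lyapunov k xv"
  unfolding lyapunov_def using params
  by (intro add_left_mono mult_right_mono divide_right_mono power_mono stepsize_antimono
      less_imp_le[OF stepsize_pos]) auto

lemma expected_variance_bound:
  fixes x1 :: "real^'d" and v1 :: "real^'m"
  assumes C1: "0 \<le> C1"
    and var_bound: "Ek n p (Suc k) (\<lambda>\<omega>. (norm (batch_grad p g\<phi> (\<omega> k) (fst (iter x1 v1 \<omega> k)) - gf2 (fst (iter x1 v1 \<omega> k))))\<^sup>2)
       \<le> C1 * Ek n p k (\<lambda>\<omega>. (norm (fst (iter x1 v1 \<omega> k)))\<^sup>2) + C2"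
  shows "Ek n p (Suc k) (\<lambda>\<omega>. (norm (batch_grad p g\<phi> (\<omega> k) (fst (iter x1 v1 \<omega> k)) - gf2 (fst (iter x1 v1 \<omega> k))))\<^sup>2)
    \<le> 2 * C1 * Ek n p k (\<lambda>\<omega>. (norm (fst (iter x1 v1 \<omega> k) - xs))\<^sup>2) + (2 * C1 * (norm xs)\<^sup>2 + C2)"
proof -
  define D where "D = Ek n p k (\<lambda>\<omega>. (norm (fst (iter x1 v1 \<omega> k) - xs))\<^sup>2)"
  have "Ek n p k (\<lambda>\<omega>. (norm (fst (iter x1 v1 \<omega> k)))\<^sup>2)
      \<le> Ek n p k (\<lambda>\<omega>. 2 * (norm (fst (iter x1 v1 \<omega> k) - xs))\<^sup>2 + 2 * (norm xs)\<^sup>2)"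
  proof (intro Ek_mono[OF N_pos])
    fix \<omega>
    show "(norm (fst (iter x1 v1 \<omega> k)))\<^sup>2 \<le> 2 * (norm (fst (iter x1 v1 \<omega> k) - xs))\<^sup>2 + 2 * (norm xs)\<^sup>2"
      using norm_add_square_le[of "fst (iter x1 v1 \<omega> k) - xs" xs] by simp
  qed
  then have "Ek n p k (\<lambda>\<omega>. (norm (fst (iter x1 v1 \<omega> k)))\<^sup>2) \<le> 2 * D + 2 * (norm xs)\<^sup>2"
    by (simp add: Ek_add[OF N_pos] Ek_cmult Ek_const D_def)
  then have "C1 * Ek n p k (\<lambda>\<omega>. (norm (fst (iter x1 v1 \<omega> k)))\<^sup>2) \<le> C1 * (2 * D + 2 * (norm xs)\<^sup>2)"
    using C1 by (rule mult_left_mono)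
  moreover have "C1 * (2 * D + 2 * (norm xs)\<^sup>2) = 2 * C1 * D + 2 * C1 * (norm xs)\<^sup>2"
    by (simp add: algebra_simps)
  ultimately show ?thesis using var_bound unfolding D_def by linarith
qed

lemma lyapunov_recursion:
  fixes x1 :: "real^'d" and v1 :: "real^'m"
  defines "a \<equiv> \<lambda>k. Ek n p k (\<lambda>\<omega>. lyapunov k (iter x1 v1 \<omega> k))"
  assumes k: "1 \<le> k" and C: "0 \<le> C1" "0 \<le> C2"
    and var_bound: "Ek n p (Suc k) (\<lambda>\<omega>. (norm (batch_grad p g\<phi> (\<omega> k) (fst (iter x1 v1 \<omega> k)) - gf2 (fst (iter x1 v1 \<omega> k))))\<^sup>2)
       \<le> C1 * Ek n p k (\<lambda>\<omega>. (norm (fst (iter x1 v1 \<omega> k)))\<^sup>2) + C2"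
    and \<gamma>_le: "\<gamma> k \<le> \<beta> * \<nu> / (2 * (\<nu> + 2 * C1 * \<beta>))" "\<gamma> k \<le> lam * rho_min (B ** transpose B) / \<nu>"
  shows "a (Suc k) \<le> (1 - \<nu> * \<gamma> k) * a k + (\<gamma> k)\<^sup>2 * (4 * C1 * (norm xs)\<^sup>2 + 2 * C2)"
proof -
  define D where "D = Ek n p k (\<lambda>\<omega>. (norm (fst (iter x1 v1 \<omega> k) - xs))\<^sup>2)"
  define V where "V = Ek n p k (\<lambda>\<omega>. (norm (snd (iter x1 v1 \<omega> k) - vs))\<^sup>2)"
  have \<gamma>: "0 < \<gamma> k" using params(1) k by (rule stepsize_pos)
  note \<gamma>_cond = stepsize_condition[OF \<nu>(1) \<beta>(1) C(1) \<gamma> \<gamma>_le(1)]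
  have D: "0 \<le> D" and V: "0 \<le> V"
    using Ek_mono[OF N_pos, of "\<lambda>_. 0"] by (auto simp: D_def V_def Ek_const)
  have a_k: "a k = D + (\<gamma> k)\<^sup>2 / lam * V"
    unfolding a_def lyapunov_def D_def V_def by (simp only: Ek_add[OF N_pos] Ek_cmult)
  have "a (Suc k) \<le> Ek n p (Suc k) (\<lambda>\<omega>. lyapunov k (iter x1 v1 \<omega> (Suc k)))"
    unfolding a_def using lyapunov_Suc_le[OF k] by (intro Ek_mono N_pos)
  also have "\<dots> \<le> (1 - 2 * \<nu> * \<gamma> k * (1 - \<gamma> k / \<beta>)) * D + (\<gamma> k)\<^sup>2 * (2 * C1 * D + (2 * C1 * (norm xs)\<^sup>2 + C2))
      + (\<gamma> k)\<^sup>2 / lam * \<kappa> * V"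
    using expected_lyapunov_step[OF k \<gamma>_cond(1), of x1 v1]
      mult_left_mono[OF expected_variance_bound[OF C(1) var_bound], of "(\<gamma> k)\<^sup>2"]
    unfolding D_def V_def by simp
  also have "\<dots> \<le> (1 - \<nu> * \<gamma> k) * D + (\<gamma> k)\<^sup>2 * (4 * C1 * (norm xs)\<^sup>2 + 2 * C2) + (\<gamma> k)\<^sup>2 / lam * (1 - \<nu> * \<gamma> k) * V"
  proof -
    have "\<nu> * \<gamma> k \<le> lam * rho_min (B ** transpose B)"
      using \<gamma>_le(2) \<nu>(1) by (simp add: pos_le_divide_eq mult.commute)
    then have "(\<gamma> k)\<^sup>2 / lam * \<kappa> * V \<le> (\<gamma> k)\<^sup>2 / lam * (1 - \<nu> * \<gamma> k) * V"
      using V params(3) by (intro mult_right_mono mult_left_mono) auto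
    moreover have "(1 - 2 * \<nu> * \<gamma> k * (1 - \<gamma> k / \<beta>) + 2 * C1 * (\<gamma> k)\<^sup>2) * D \<le> (1 - \<nu> * \<gamma> k) * D"
      using \<gamma>_cond(2) D by (rule mult_right_mono)
    moreover have "(\<gamma> k)\<^sup>2 * (2 * C1 * (norm xs)\<^sup>2 + C2) \<le> (\<gamma> k)\<^sup>2 * (4 * C1 * (norm xs)\<^sup>2 + 2 * C2)"
      using C by (intro mult_left_mono) auto
    ultimately show ?thesis by (simp add: algebra_simps)
  qed
  also have "\<dots> = (1 - \<nu> * \<gamma> k) * a k + (\<gamma> k)\<^sup>2 * (4 * C1 * (norm xs)\<^sup>2 + 2 * C2)"
    unfolding a_k by (simp add: algebra_simps)
  finally show ?thesis .
qed

end

theorem theorem4p8: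
  fixes f1 :: "real^'m \<Rightarrow> ereal"
    and B :: "real^'d^'m"
    and n p :: nat
    and \<phi> :: "nat \<Rightarrow> real^'d \<Rightarrow> real"
    and g\<phi> :: "nat \<Rightarrow> real^'d \<Rightarrow> real^'d"
    and f2 :: "real^'d \<Rightarrow> real"
    and gf2 :: "real^'d \<Rightarrow> real^'d"
    and \<nu> \<beta> lam c \<alpha> C1 C2 :: real
    and xs x1 :: "real^'d" and vs v1 :: "real^'m"
    and k0 :: nat
  assumes f1: "proper_fun f1" "ereal_convex f1" "lsc_fun f1"
    and B_rank: "rank B = CARD('m)"
    and np: "0 < n" "0 < p" "p dvd n"
    and \<phi>_grad: "\<And>j x. j \<in> {1..n} \<Longrightarrow> (\<phi> j has_derivative (\<lambda>h. g\<phi> j x \<bullet> h)) (at x)"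
    and \<phi>_smooth: "\<And>j. j \<in> {1..n} \<Longrightarrow> continuous_on UNIV (g\<phi> j)"
    and \<phi>_convex: "\<And>j. j \<in> {1..n} \<Longrightarrow> convex_on UNIV (\<phi> j)"
    and f2_def: "\<And>x. f2 x = (1 / real n) * (\<Sum>j=1..n. \<phi> j x)"
    and gf2_def: "\<And>x. gf2 x = (1 / real n) *\<^sub>R (\<Sum>j=1..n. g\<phi> j x)"
    and \<nu>: "0 < \<nu>" "strongly_convex \<nu> f2"
    and \<beta>: "0 < \<beta>" "(1 / \<beta>)-lipschitz_on UNIV gf2"
    and xs_min: "\<And>x. f1 (B *v xs) + ereal (f2 xs) \<le> f1 (B *v x) + ereal (f2 x)"
    and vs_fix: "\<And>k. k \<ge> 1 \<Longrightarrow>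
       vs = (let \<gamma> = stepsize c \<alpha> k;
                 w = (lam / \<gamma>) *\<^sub>R (B *v (xs - \<gamma> *\<^sub>R gf2 xs)) + (mat 1 - lam *\<^sub>R (B ** transpose B)) *v vs
             in w - prox (\<lambda>z. ereal (lam / \<gamma>) * f1 ((\<gamma> / lam) *\<^sub>R z)) w)"
    and xs_fix: "\<And>k. k \<ge> 1 \<Longrightarrow>
       xs = xs - stepsize c \<alpha> k *\<^sub>R gf2 xs - stepsize c \<alpha> k *\<^sub>R (transpose B *v vs)"
    and params: "0 < c" "0 < \<alpha>" "\<alpha> \<le> 1" "0 < lam" "lam < 1 / rho_max (B ** transpose B)"
    and C: "0 < C1" "0 < C2"
    and var_bound: "\<And>k. k \<ge> 1 \<Longrightarrow>
       Ek n p (k + 1) (\<lambda>\<omega>. (norm (batch_grad p g\<phi> (\<omega> k) (fst (alg f1 B p g\<phi> c \<alpha> lam x1 v1 \<omega> k))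
                               - gf2 (fst (alg f1 B p g\<phi> c \<alpha> lam x1 v1 \<omega> k))))\<^sup>2)
       \<le> C1 * Ek n p k (\<lambda>\<omega>. (norm (fst (alg f1 B p g\<phi> c \<alpha> lam x1 v1 \<omega> k)))\<^sup>2) + C2"
    and k0: "0 < k0"
      "stepsize c \<alpha> k0 \<le> min (\<beta> * \<nu> / (2 * (\<nu> + 2 * C1 * \<beta>))) (lam * rho_min (B ** transpose B) / \<nu>)"
  shows "\<forall>k \<ge> k0.
     (let a = (\<lambda>k. Ek n p k (\<lambda>\<omega>. (norm (fst (alg f1 B p g\<phi> c \<alpha> lam x1 v1 \<omega> k) - xs))\<^sup>2
                  + (stepsize c \<alpha> k)\<^sup>2 / lam * (norm (snd (alg f1 B p g\<phi> c \<alpha> lam x1 v1 \<omega> k) - vs))\<^sup>2));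
          M1 = 4 * C1 * (norm xs)\<^sup>2 + 2 * C2
      in a (k + 1) \<le> (1 - \<nu> * stepsize c \<alpha> k) * a k + (stepsize c \<alpha> k)\<^sup>2 * M1)"
proof -
  interpret stochastic_primal_dual f1 B n p \<phi> g\<phi> f2 gf2 \<nu> \<beta> lam c \<alpha> xs vs
    using f1 np \<phi>_grad f2_def gf2_def \<nu> \<beta> vs_fix xs_fix params by unfold_locales auto
  show ?thesis
  proof (intro allI impI)
    fix k assume "k0 \<le> k"
    then have k: "1 \<le> k" using k0(1) by simp
    have "\<gamma> k \<le> \<gamma> k0" using params k0(1) \<open>k0 \<le> k\<close> by (intro stepsize_antimono) auto
    then have "\<gamma> k \<le> \<beta> * \<nu> / (2 * (\<nu> + 2 * C1 * \<beta>))" "\<gamma> k \<le> lam * rho_min (B ** transpose B) / \<nu>"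
      using k0(2) by auto
    from lyapunov_recursion[OF k less_imp_le[OF C(1)] less_imp_le[OF C(2)]
        var_bound[OF k, folded Suc_eq_plus1] this]
    show "let a = (\<lambda>k. Ek n p k (\<lambda>\<omega>. (norm (fst (alg f1 B p g\<phi> c \<alpha> lam x1 v1 \<omega> k) - xs))\<^sup>2
                  + (stepsize c \<alpha> k)\<^sup>2 / lam * (norm (snd (alg f1 B p g\<phi> c \<alpha> lam x1 v1 \<omega> k) - vs))\<^sup>2));
          M1 = 4 * C1 * (norm xs)\<^sup>2 + 2 * C2
      in a (k + 1) \<le> (1 - \<nu> * stepsize c \<alpha> k) * a k + (stepsize c \<alpha> k)\<^sup>2 * M1"
      by (simp add: Let_def lyapunov_def)
  qed
qed

end
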